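(* Let $X=\ell_p$ for some $1\le p<\infty$, or $X=c_0$, considered as a Banach algebra under coordinatewise multiplication, and let $\lambda\in\mathbb C$ with $|\lambda|>1$. Then $\lambda B$ admits an algebra of $\mathcal A_{\underline{\log}}$-hypercyclic vectors, except zero. In particular, it admits an algebra of upper frequently hypercyclic vectors, except zero.
   Context: $\lambda B(x(1),x(2),x(3),\ldots)=(\lambda x(2),\lambda x(3),\ldots)$. The lower logarithmic density of $A\subset\mathbb N_0$ is $\liminf_{N\to\infty}\frac{\sum_{1\le n\le N,n\in A}1/n}{\sum_{1\le n\le N}1/n}$, and $\mathcal A_{\underline{\log}}$ is the family of subsets of $\mathbb N_0$ of positive lower logarithmic density. A vector $x$ is $\mathcal A$-hypercyclic for $T$ if for every non-empty open $U\subset X$, $\{n\ge0:T^nx\in U\}\in\mathcal A$; upper frequently hypercyclic means $\mathcal A$-hypercyclic for $\mathcal A$ the family of sets of positive upper density $\limsup_{N\to\infty}\frac{\mathrm{card}(A\cap[0,N])}{N+1}$. An algebra of such vectors, except zero, is a subalgebra $\ne\{0\}$ of $X$ all of whose non-zero elements are such vectors. *)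

theory Defs
  imports "HOL-Analysis.Analysis"
begin

text \<open>Sequences x(1), x(2), ... are modelled as functions nat => complex indexed from 0.
  The backward shift B sends x to (x(1), x(2), ...), i.e. (\<lambda>n. x (Suc n)).\<close>

definition lp_space :: "real \<Rightarrow> (nat \<Rightarrow> complex) set" where
  "lp_space p = {x. summable (\<lambda>n. norm (x n) powr p)}"

definition lp_norm :: "real \<Rightarrow> (nat \<Rightarrow> complex) \<Rightarrow> real" where
  "lp_norm p x = (\<Sum>n. norm (x n) powr p) powr (1 / p)"

definition c0_space :: "(nat \<Rightarrow> complex) set" where
  "c0_space = {x. x \<longlonglongrightarrow> 0}"

definition c0_norm :: "(nat \<Rightarrow> complex) \<Rightarrow> real" where
  "c0_norm x = (SUP n. norm (x n))"

definition backward_shift :: "(nat \<Rightarrow> complex) \<Rightarrow> (nat \<Rightarrow> complex)" where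
  "backward_shift x = (\<lambda>n. x (Suc n))"

definition open_in_space :: "(nat \<Rightarrow> complex) set \<Rightarrow> ((nat \<Rightarrow> complex) \<Rightarrow> real)
    \<Rightarrow> (nat \<Rightarrow> complex) set \<Rightarrow> bool" where
  "open_in_space S N U \<longleftrightarrow> U \<subseteq> S \<and>
     (\<forall>x\<in>U. \<exists>e>0. \<forall>y\<in>S. N (\<lambda>n. y n - x n) < e \<longrightarrow> y \<in> U)"

definition lower_log_density :: "nat set \<Rightarrow> ereal" where
  "lower_log_density A = liminf (\<lambda>N. ereal
      ((\<Sum>n\<in>{n\<in>A. 1 \<le> n \<and> n \<le> N}. 1 / real n) / (\<Sum>n\<in>{1..N}. 1 / real n)))"

definition upper_density :: "nat set \<Rightarrow> ereal" where
  "upper_density A = limsup (\<lambda>N. ereal (real (card (A \<inter> {0..N})) / real (N + 1)))"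

definition A_log :: "nat set set" where
  "A_log = {A. lower_log_density A > 0}"

definition A_ud :: "nat set set" where
  "A_ud = {A. upper_density A > 0}"

definition A_hypercyclic :: "nat set set \<Rightarrow> (nat \<Rightarrow> complex) set \<Rightarrow> ((nat \<Rightarrow> complex) \<Rightarrow> real)
    \<Rightarrow> ((nat \<Rightarrow> complex) \<Rightarrow> (nat \<Rightarrow> complex)) \<Rightarrow> (nat \<Rightarrow> complex) \<Rightarrow> bool" where
  "A_hypercyclic \<A> S N T x \<longleftrightarrow> x \<in> S \<and>
     (\<forall>U. open_in_space S N U \<and> U \<noteq> {} \<longrightarrow> {n. (T ^^ n) x \<in> U} \<in> \<A>)"

definition is_subalgebra :: "(nat \<Rightarrow> complex) set \<Rightarrow> (nat \<Rightarrow> complex) set \<Rightarrow> bool" where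
  "is_subalgebra S A \<longleftrightarrow> A \<subseteq> S \<and> (\<lambda>n. 0) \<in> A \<and>
     (\<forall>x\<in>A. \<forall>y\<in>A. (\<lambda>n. x n + y n) \<in> A \<and> (\<lambda>n. x n * y n) \<in> A) \<and>
     (\<forall>c::complex. \<forall>x\<in>A. (\<lambda>n. c * x n) \<in> A)"

definition admits_algebra :: "nat set set \<Rightarrow> (nat \<Rightarrow> complex) set \<Rightarrow> ((nat \<Rightarrow> complex) \<Rightarrow> real)
    \<Rightarrow> ((nat \<Rightarrow> complex) \<Rightarrow> (nat \<Rightarrow> complex)) \<Rightarrow> bool" where
  "admits_algebra \<A> S N T \<longleftrightarrow>
     (\<exists>A. is_subalgebra S A \<and> A \<noteq> {\<lambda>n. 0} \<and> (\<forall>x\<in>A - {\<lambda>n. 0}. A_hypercyclic \<A> S N T x))"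

end

(* The algebra is {P(x) : P a polynomial with P(0) = 0} for a single vector x. Positions are grouped
   into epochs of geometrically growing length; each epoch serves a degree d and a dyadic target
   vector v, and every pair (d, v) is served by a set of epochs of positive density. In an epoch
   serving (d, v), x vanishes except at the positions n + m, for n in an arithmetic progression of
   block starts and m < length v, where it is a d-th root of v_m / lam^n. If d is the lowest degree
   of P, with coefficient c, the lowest term dominates and (lam B)^n P(x) differs from c v by a
   sequence of small l1-norm. Choosing c v close to a point of an open set U, the times n with
   (lam B)^n P(x) in U contain all block starts of the late epochs serving (d, v); each such epoch
   contributes a fixed amount to the logarithmic sum and a fixed proportion of its length, which
   gives positive lower logarithmic density and positive upper density. *)

theory Submission
  imports Defs "HOL-Computational_Algebra.Polynomial"
begin

lemma eventually_le_power:
  assumes "1 < (r::real)"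
  shows "eventually (\<lambda>s. W \<le> r ^ s) sequentially"
proof -
  obtain n where "W < r ^ n" using real_arch_pow[OF assms] by blast
  then have "W \<le> r ^ s" if "n \<le> s" for s
    using power_increasing[OF that, of r] assms by linarith
  then show ?thesis unfolding eventually_sequentially by blast
qed

lemma eventually_linear_le_power:
  assumes "1 < (r::real)"
  shows "eventually (\<lambda>s. A * real s + B \<le> r ^ s) sequentially"
proof -
  have "(\<lambda>s. A * (real s / r ^ s) + B * inverse r ^ s) \<longlonglongrightarrow> A * 0 + B * 0"
    using assms lim_n_over_pown[of r]
    by (intro tendsto_intros LIMSEQ_power_zero) (auto simp: inverse_less_1_iff)
  then have "eventually (\<lambda>s. A * (real s / r ^ s) + B * inverse r ^ s < 1) sequentially"
    by (intro order_tendstoD) auto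
  then show ?thesis
  proof eventually_elim
    case (elim s)
    have pos: "0 < r ^ s" using assms by simp
    then have "A * (real s / r ^ s) + B * inverse r ^ s = (A * real s + B) / r ^ s"
      by (simp add: field_simps power_inverse add_divide_distrib)
    with elim pos show ?case by (simp add: field_simps)
  qed
qed

lemma eventually_square_linear_le_power:
  assumes "1 < (r::real)" "0 \<le> A" "0 \<le> B"
  shows "eventually (\<lambda>s. (A * real s + B)\<^sup>2 \<le> r ^ s) sequentially"
proof -
  have "eventually (\<lambda>s. A * real s + B \<le> sqrt r ^ s) sequentially"
    using assms by (intro eventually_linear_le_power) simp
  then show ?thesis
  proof eventually_elim
    case (elim s)
    then have "(A * real s + B)\<^sup>2 \<le> (sqrt r ^ s)\<^sup>2"
      using assms by (intro power_mono) auto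
    also have "\<dots> = (sqrt r ^ 2) ^ s" by (simp only: power_mult[symmetric] mult.commute)
    also have "\<dots> = r ^ s" using assms(1) by simp
    finally show ?case .
  qed
qed

lemma real_div_diff_le:
  fixes x m y :: nat
  assumes "0 < m"
  shows "real x / real m - 1 - real y \<le> real (x div m - y)"
proof -
  have "real x < real (m + m * (x div m))"
    using dividend_less_times_div[OF assms, of x] by (simp only: of_nat_less_iff)
  then have "real x / real m - 1 < real (x div m)"
    using assms by (simp add: pos_divide_less_eq algebra_simps)
  moreover have "real (x div m) - real y \<le> real (x div m - y)"
    by (cases "y \<le> x div m") (simp_all add: of_nat_diff)
  ultimately show ?thesis by linarith
qed

lemma sum_if_less_le:
  assumes "0 \<le> (c::real)"
  shows "(\<Sum>k<N. if k < L then c else 0) \<le> real L * c"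
proof -
  have "(\<Sum>k<N. if k < L then c else 0) = (\<Sum>k\<in>{k\<in>{..<N}. k < L}. c)"
    by (rule sum.inter_filter[symmetric]) simp
  also have "\<dots> \<le> (\<Sum>k<L. c)" using assms by (intro sum_mono2) auto
  finally show ?thesis by simp
qed

lemma sum_geometric_tail_le:
  assumes "0 \<le> (q::real)" "q < 1"
  shows "(\<Sum>k<N. if K \<le> k then q ^ k else 0) \<le> q ^ K / (1 - q)"
proof -
  have "(\<Sum>k<N. if K \<le> k then q ^ k else 0) * (1 - q) = (if K \<le> N then q ^ K - q ^ N else 0)"
  proof (induction N)
    case (Suc N)
    show ?case
    proof (cases "K \<le> N")
      case True
      let ?S = "\<Sum>k<N. if K \<le> k then q ^ k else 0"
      have "(?S + q ^ N) * (1 - q) = ?S * (1 - q) + q ^ N - q * q ^ N" by (simp add: algebra_simps)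
      also have "\<dots> = q ^ K - q ^ Suc N" using Suc True by simp
      finally show ?thesis using True by simp
    next
      case False
      then show ?thesis using Suc by (cases "K = Suc N") (auto simp: algebra_simps)
    qed
  qed simp
  then have "(\<Sum>k<N. if K \<le> k then q ^ k else 0) * (1 - q) \<le> q ^ K"
    using assms by auto
  then show ?thesis using assms by (simp add: field_simps)
qed

lemma sum_inverse_consecutive_products:
  "(\<Sum>k<N. 1 / ((real j + real k + 1) * (real j + real k + 2)))
     = 1 / (real j + 1) - 1 / (real j + real N + 1)"
proof (induction N)
  case (Suc N)
  have "1 / (real j + real N + 1) - 1 / (real j + real N + 2)
        = 1 / ((real j + real N + 1) * (real j + real N + 2))"
    by (simp add: field_simps)
  with Suc show ?case by (simp add: algebra_simps)
qed simp

lemma sum_inverse_consecutive_products_le_1: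
  "(\<Sum>k<N. 1 / ((real j + real k + 1) * (real j + real k + 2))) \<le> 1"
proof -
  have "1 / (real j + 1) \<le> 1" "0 \<le> 1 / (real j + real N + 1)" by simp_all
  then show ?thesis unfolding sum_inverse_consecutive_products by linarith
qed

lemma summable_inverse_consecutive_products:
  "summable (\<lambda>q. 1 / ((real q + 1) * (real q + 2)))"
proof (rule summableI_nonneg_bounded)
  show "(\<Sum>k<n. 1 / ((real k + 1) * (real k + 2))) \<le> 1" for n
    using sum_inverse_consecutive_products_le_1[where j = 0 and N = n] by simp
qed simp

lemma norm_dyadic_round_le:
  "norm (Complex (of_int \<lfloor>2 ^ k * Re z\<rfloor>) (of_int \<lfloor>2 ^ k * Im z\<rfloor>) / 2 ^ k - z) \<le> 2 / 2 ^ k"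
proof -
  have floor_err: "\<bar>of_int \<lfloor>2 ^ k * a\<rfloor> / 2 ^ k - a\<bar> \<le> 1 / 2 ^ k" for a :: real
  proof -
    have "of_int \<lfloor>2 ^ k * a\<rfloor> \<le> 2 ^ k * a" "2 ^ k * a < of_int \<lfloor>2 ^ k * a\<rfloor> + 1"
      by linarith+
    then have "of_int \<lfloor>2 ^ k * a\<rfloor> / 2 ^ k \<le> a" "a < of_int \<lfloor>2 ^ k * a\<rfloor> / 2 ^ k + 1 / 2 ^ k"
      by (simp_all add: field_simps)
    then show ?thesis by linarith
  qed
  let ?w = "Complex (of_int \<lfloor>2 ^ k * Re z\<rfloor>) (of_int \<lfloor>2 ^ k * Im z\<rfloor>) / 2 ^ k - z"
  have re: "Re ?w = of_int \<lfloor>2 ^ k * Re z\<rfloor> / 2 ^ k - Re z"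
    and im: "Im ?w = of_int \<lfloor>2 ^ k * Im z\<rfloor> / 2 ^ k - Im z"
    by (simp_all add: Re_divide_numeral Im_divide_numeral)
  have "norm ?w \<le> \<bar>Re ?w\<bar> + \<bar>Im ?w\<bar>" by (rule cmod_le)
  also have "\<dots> \<le> 1 / 2 ^ k + 1 / 2 ^ k"
    unfolding re im by (intro add_mono floor_err)
  finally show ?thesis by simp
qed

lemma powr_inverse_of_nat_power:
  fixes z :: complex
  assumes "0 < d"
  shows "(z powr (1 / of_nat d)) ^ d = z"
proof (cases "z = 0")
  case False
  have "(z powr (1 / of_nat d)) ^ d = exp (of_nat d * (1 / of_nat d * Ln z))"
    using False by (simp add: powr_def exp_of_nat_mult[symmetric])
  also have "\<dots> = z" using assms False by simp
  finally show ?thesis .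
qed (use assms in simp)

section \<open>Sequence spaces\<close>

definition l1_space :: "(nat \<Rightarrow> complex) set" where
  "l1_space = {y. summable (\<lambda>k. norm (y k))}"

lemma l1_space_subset_lp_space:
  assumes "1 \<le> p"
  shows "l1_space \<subseteq> lp_space p"
proof
  fix y assume "y \<in> l1_space"
  then have sy: "summable (\<lambda>k. norm (y k))" by (simp add: l1_space_def)
  then have "(\<lambda>k. norm (y k)) \<longlonglongrightarrow> 0" by (rule summable_LIMSEQ_zero)
  then have "eventually (\<lambda>k. norm (y k) < 1) sequentially" by (rule order_tendstoD(2)) simp
  then have "eventually (\<lambda>k. norm (norm (y k) powr p) \<le> norm (y k)) sequentially"
  proof eventually_elim
    case (elim k)
    show ?case
    proof (cases "y k = 0")
      case False
      then have "norm (y k) powr p \<le> norm (y k)"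
        using elim assms by (intro powr_le_one_le) auto
      then show ?thesis by simp
    qed simp
  qed
  then have "summable (\<lambda>k. norm (y k) powr p)"
    by (rule summable_comparison_test_ev[OF _ sy])
  then show "y \<in> lp_space p" by (simp add: lp_space_def)
qed

lemma l1_space_subset_c0_space: "l1_space \<subseteq> c0_space"
proof
  fix y assume "y \<in> l1_space"
  then have "(\<lambda>k. norm (y k)) \<longlonglongrightarrow> 0"
    by (intro summable_LIMSEQ_zero) (simp add: l1_space_def)
  then show "y \<in> c0_space" by (simp add: c0_space_def tendsto_norm_zero_iff)
qed

lemma shift_scale_in_l1_space:
  assumes "f \<in> l1_space"
  shows "(\<lambda>k. c * f (n + k)) \<in> l1_space"
proof -
  have "summable (\<lambda>k. norm (f (k + n)))"
    using assms summable_iff_shift[of "\<lambda>k. norm (f k)" n] by (simp add: l1_space_def)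
  then have "summable (\<lambda>k. norm c * norm (f (n + k)))"
    by (intro summable_mult) (simp add: add.commute)
  then show ?thesis by (simp add: l1_space_def norm_mult)
qed

lemma funpow_scaled_shift:
  "((\<lambda>x n. lam * backward_shift x n) ^^ n) f = (\<lambda>k. lam ^ n * f (n + k))"
  by (induction n) (auto simp: backward_shift_def)

definition l1_approximable :: "(nat \<Rightarrow> complex) set \<Rightarrow> ((nat \<Rightarrow> complex) \<Rightarrow> real) \<Rightarrow> bool" where
  "l1_approximable S N \<longleftrightarrow> (\<forall>x0\<in>S. \<forall>e>0. \<exists>L. \<exists>\<epsilon>>0. \<forall>u y.
     (\<forall>k<L. norm (u k - x0 k) \<le> \<epsilon>) \<and> (\<forall>k\<ge>L. u k = 0) \<and>
     summable (\<lambda>k. norm (y k)) \<and> (\<Sum>k. norm (y k)) \<le> \<epsilon> \<longrightarrow> N (\<lambda>k. u k + y k - x0 k) < e)"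

lemma l1_approximable_c0: "l1_approximable c0_space c0_norm"
  unfolding l1_approximable_def
proof (intro ballI allI impI)
  fix x0 and e :: real
  assume x0: "x0 \<in> c0_space" and e: "0 < e"
  then have "(\<lambda>k. norm (x0 k)) \<longlonglongrightarrow> 0" by (simp add: c0_space_def tendsto_norm_zero_iff)
  then have "eventually (\<lambda>k. norm (x0 k) < e / 4) sequentially"
    by (rule order_tendstoD(2)) (use e in simp)
  then obtain L where L: "\<forall>k\<ge>L. norm (x0 k) < e / 4" by (auto simp: eventually_sequentially)
  show "\<exists>L. \<exists>\<epsilon>>0. \<forall>u y. (\<forall>k<L. norm (u k - x0 k) \<le> \<epsilon>) \<and> (\<forall>k\<ge>L. u k = 0) \<and>
     summable (\<lambda>k. norm (y k)) \<and> (\<Sum>k. norm (y k)) \<le> \<epsilon> \<longrightarrow> c0_norm (\<lambda>k. u k + y k - x0 k) < e"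
  proof (intro exI[of _ L] exI[of _ "e / 4"] conjI allI impI)
    fix u y :: "nat \<Rightarrow> complex"
    assume a: "(\<forall>k<L. norm (u k - x0 k) \<le> e / 4) \<and> (\<forall>k\<ge>L. u k = 0) \<and>
      summable (\<lambda>k. norm (y k)) \<and> (\<Sum>k. norm (y k)) \<le> e / 4"
    have "norm (u k + y k - x0 k) \<le> e / 2" for k
    proof -
      have "norm (y k) \<le> (\<Sum>k. norm (y k))"
        using a sum_le_suminf[of "\<lambda>k. norm (y k)" "{k}"] by simp
      moreover have "norm (u k - x0 k) \<le> e / 4"
        using a L[rule_format, of k] by (cases "k < L") auto
      moreover have "norm (u k + y k - x0 k) \<le> norm (y k) + norm (u k - x0 k)"
        by (metis add.commute add_diff_eq norm_triangle_ineq)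
      ultimately show ?thesis using a by linarith
    qed
    then have "c0_norm (\<lambda>k. u k + y k - x0 k) \<le> e / 2"
      unfolding c0_norm_def by (intro cSUP_least) auto
    then show "c0_norm (\<lambda>k. u k + y k - x0 k) < e" using e by linarith
  qed (use e in simp)
qed

lemma sum_powr_le_sum_norm:
  fixes y :: "nat \<Rightarrow> complex"
  assumes "summable (\<lambda>k. norm (y k))" "(\<Sum>k. norm (y k)) \<le> 1" "1 \<le> p"
  shows "summable (\<lambda>k. norm (y k) powr p)" "(\<Sum>k. norm (y k) powr p) \<le> (\<Sum>k. norm (y k))"
proof -
  have "norm (y k) \<le> 1" for k
    using assms sum_le_suminf[of "\<lambda>k. norm (y k)" "{k}"] by simp
  then have le: "norm (y k) powr p \<le> norm (y k)" for k
    using assms(3) by (cases "y k = 0") (simp_all add: powr_le_one_le)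
  then show sy: "summable (\<lambda>k. norm (y k) powr p)"
    by (intro summable_comparison_test[OF _ assms(1)]) auto
  show "(\<Sum>k. norm (y k) powr p) \<le> (\<Sum>k. norm (y k))"
    by (rule suminf_le[OF le sy assms(1)])
qed

lemma sum_powr_add_le:
  fixes y z :: "nat \<Rightarrow> complex"
  assumes sy: "summable (\<lambda>k. norm (y k) powr p)" and sz: "summable (\<lambda>k. norm (z k) powr p)"
    and p: "0 \<le> p"
  shows "summable (\<lambda>k. norm (y k + z k) powr p)"
    "(\<Sum>k. norm (y k + z k) powr p) \<le> 2 powr p * ((\<Sum>k. norm (y k) powr p) + (\<Sum>k. norm (z k) powr p))"
proof -
  have le: "norm (y k + z k) powr p \<le> 2 powr p * (norm (y k) powr p + norm (z k) powr p)" for k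
  proof -
    have "norm (y k + z k) \<le> 2 * max (norm (y k)) (norm (z k))"
      using norm_triangle_ineq[of "y k" "z k"] by linarith
    then have "norm (y k + z k) powr p \<le> (2 * max (norm (y k)) (norm (z k))) powr p"
      using p by (intro powr_mono2) auto
    also have "\<dots> = 2 powr p * max (norm (y k)) (norm (z k)) powr p"
      by (simp add: powr_mult)
    also have "max (norm (y k)) (norm (z k)) powr p \<le> norm (y k) powr p + norm (z k) powr p"
      by (simp add: max_def)
    finally show ?thesis by (simp add: mult_left_mono)
  qed
  have sg: "summable (\<lambda>k. 2 powr p * (norm (y k) powr p + norm (z k) powr p))"
    by (intro summable_mult summable_add sy sz)
  show "summable (\<lambda>k. norm (y k + z k) powr p)"
    by (rule summable_comparison_test[OF _ sg]) (use le in auto)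
  then have "(\<Sum>k. norm (y k + z k) powr p) \<le> (\<Sum>k. 2 powr p * (norm (y k) powr p + norm (z k) powr p))"
    by (rule suminf_le[OF le _ sg])
  also have "\<dots> = 2 powr p * ((\<Sum>k. norm (y k) powr p) + (\<Sum>k. norm (z k) powr p))"
    by (simp add: suminf_mult suminf_add[OF sy sz] summable_add[OF sy sz])
  finally show "(\<Sum>k. norm (y k + z k) powr p) \<le> 2 powr p * ((\<Sum>k. norm (y k) powr p) + (\<Sum>k. norm (z k) powr p))" .
qed

lemma sum_powr_split_le:
  fixes z x0 :: "nat \<Rightarrow> complex"
  assumes sx: "summable (\<lambda>k. norm (x0 k) powr p)" and p: "1 \<le> p"
    and head: "\<forall>k<L. norm (z k) \<le> \<epsilon>" and "\<epsilon> \<le> 1" and tail: "\<forall>k\<ge>L. norm (z k) = norm (x0 k)"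
  shows "summable (\<lambda>k. norm (z k) powr p)"
    "(\<Sum>k. norm (z k) powr p) \<le> real L * \<epsilon> + (\<Sum>i. norm (x0 (i + L)) powr p)"
proof -
  have shift: "(\<lambda>i. norm (z (i + L)) powr p) = (\<lambda>i. norm (x0 (i + L)) powr p)"
    using tail by simp
  have "summable (\<lambda>i. norm (x0 (i + L)) powr p)"
    using sx summable_iff_shift[of "\<lambda>k. norm (x0 k) powr p" L] by simp
  then show sz: "summable (\<lambda>k. norm (z k) powr p)"
    using summable_iff_shift[of "\<lambda>k. norm (z k) powr p" L] shift by simp
  have "norm (z k) powr p \<le> \<epsilon>" if "k < L" for k
  proof (cases "z k = 0")
    case False
    then have "norm (z k) powr p \<le> norm (z k)"
      using head that \<open>\<epsilon> \<le> 1\<close> p by (intro powr_le_one_le) auto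
    then show ?thesis using head that by fastforce
  qed (use head that in auto)
  then have "(\<Sum>k<L. norm (z k) powr p) \<le> real L * \<epsilon>"
    using sum_mono[of "{..<L}" "\<lambda>k. norm (z k) powr p" "\<lambda>_. \<epsilon>"] by simp
  moreover have "(\<Sum>k. norm (z k) powr p) = (\<Sum>i. norm (z (i + L)) powr p) + (\<Sum>k<L. norm (z k) powr p)"
    by (rule suminf_split_initial_segment[OF sz])
  ultimately show "(\<Sum>k. norm (z k) powr p) \<le> real L * \<epsilon> + (\<Sum>i. norm (x0 (i + L)) powr p)"
    unfolding shift by linarith
qed

lemma lp_norm_less:
  assumes "0 < p" "0 < e" "summable (\<lambda>k. norm (w k) powr p)" "(\<Sum>k. norm (w k) powr p) < e powr p"
  shows "lp_norm p w < e"
proof -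
  have "0 \<le> (\<Sum>k. norm (w k) powr p)" by (intro suminf_nonneg assms(3)) auto
  then have "lp_norm p w < (e powr p) powr (1 / p)"
    unfolding lp_norm_def using assms by (intro powr_less_mono2) auto
  also have "\<dots> = e" using assms by (simp add: powr_powr)
  finally show ?thesis .
qed

lemma l1_approximable_lp:
  assumes p: "1 \<le> p"
  shows "l1_approximable (lp_space p) (lp_norm p)"
  unfolding l1_approximable_def
proof (intro ballI allI impI)
  fix x0 and e :: real
  assume x0: "x0 \<in> lp_space p" and e: "0 < e"
  have sx: "summable (\<lambda>k. norm (x0 k) powr p)" using x0 by (simp add: lp_space_def)
  define \<eta> where "\<eta> = e powr p / (4 * 2 powr p)"
  have \<eta>: "0 < \<eta>" using e by (simp add: \<eta>_def)
  obtain L where L: "norm (\<Sum>i. norm (x0 (i + L)) powr p) < \<eta>"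
    using suminf_exist_split[OF \<eta> sx] by blast
  define \<epsilon> where "\<epsilon> = min 1 (\<eta> / (L + 1))"
  have "\<epsilon> * (L + 1) \<le> \<eta>"
  proof (cases "\<eta> / (L + 1) \<le> 1")
    case False
    then show ?thesis by (simp add: \<epsilon>_def field_simps)
  qed (simp add: \<epsilon>_def)
  then have \<epsilon>: "0 < \<epsilon>" "\<epsilon> \<le> 1" "\<epsilon> * (L + 1) \<le> \<eta>"
    using \<eta> by (auto simp: \<epsilon>_def)
  show "\<exists>L. \<exists>\<epsilon>>0. \<forall>u y. (\<forall>k<L. norm (u k - x0 k) \<le> \<epsilon>) \<and> (\<forall>k\<ge>L. u k = 0) \<and>
     summable (\<lambda>k. norm (y k)) \<and> (\<Sum>k. norm (y k)) \<le> \<epsilon> \<longrightarrow> lp_norm p (\<lambda>k. u k + y k - x0 k) < e"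
  proof (intro exI[of _ L] exI[of _ \<epsilon>] conjI allI impI \<epsilon>(1))
    fix u y :: "nat \<Rightarrow> complex"
    assume a: "(\<forall>k<L. norm (u k - x0 k) \<le> \<epsilon>) \<and> (\<forall>k\<ge>L. u k = 0) \<and>
      summable (\<lambda>k. norm (y k)) \<and> (\<Sum>k. norm (y k)) \<le> \<epsilon>"
    have sy: "summable (\<lambda>k. norm (y k) powr p)" "(\<Sum>k. norm (y k) powr p) \<le> \<epsilon>"
      using sum_powr_le_sum_norm[of y p] a \<epsilon>(2) p by auto
    have sz: "summable (\<lambda>k. norm (u k - x0 k) powr p)"
      "(\<Sum>k. norm (u k - x0 k) powr p) \<le> real L * \<epsilon> + (\<Sum>i. norm (x0 (i + L)) powr p)"
      using sum_powr_split_le[OF sx p _ \<epsilon>(2), of L "\<lambda>k. u k - x0 k"] a by auto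
    have "(\<Sum>k. norm (y k + (u k - x0 k)) powr p)
        \<le> 2 powr p * ((\<Sum>k. norm (y k) powr p) + (\<Sum>k. norm (u k - x0 k) powr p))"
      using sum_powr_add_le(2)[OF sy(1) sz(1)] p by simp
    also have "\<dots> \<le> 2 powr p * (2 * \<eta>)"
      using sy(2) sz(2) L \<epsilon>(3) by (intro mult_left_mono) (auto simp: algebra_simps)
    also have "\<dots> < e powr p" using e by (simp add: \<eta>_def)
    finally show "lp_norm p (\<lambda>k. u k + y k - x0 k) < e"
      using sum_powr_add_le(1)[OF sy(1) sz(1)] p e
      by (intro lp_norm_less) (auto simp: algebra_simps)
  qed
qed

lemma open_in_space_l1_approximable:
  assumes "l1_approximable S N" "open_in_space S N U" "U \<noteq> {}"
  obtains \<epsilon> L x0 where "0 < \<epsilon>"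
    "\<And>u y. (\<forall>k<L. norm (u k - x0 k) \<le> \<epsilon>) \<Longrightarrow> (\<forall>k\<ge>L. u k = 0) \<Longrightarrow>
      summable (\<lambda>k. norm (y k)) \<Longrightarrow> (\<Sum>k. norm (y k)) \<le> \<epsilon> \<Longrightarrow> (\<lambda>k. u k + y k) \<in> S \<Longrightarrow>
      (\<lambda>k. u k + y k) \<in> U"
proof -
  obtain x0 where "x0 \<in> U" using assms(3) by blast
  then obtain \<rho> where \<rho>: "0 < \<rho>" "\<forall>y\<in>S. N (\<lambda>n. y n - x0 n) < \<rho> \<longrightarrow> y \<in> U" and "x0 \<in> S"
    using assms(2) unfolding open_in_space_def by blast
  then obtain L \<epsilon> where \<epsilon>: "0 < \<epsilon>" and approx: "\<forall>u y. (\<forall>k<L. norm (u k - x0 k) \<le> \<epsilon>) \<and>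
      (\<forall>k\<ge>L. u k = 0) \<and> summable (\<lambda>k. norm (y k)) \<and> (\<Sum>k. norm (y k)) \<le> \<epsilon> \<longrightarrow>
      N (\<lambda>k. u k + y k - x0 k) < \<rho>"
    using assms(1) unfolding l1_approximable_def by meson
  show thesis
  proof (rule that)
    fix u y assume "\<forall>k<L. norm (u k - x0 k) \<le> \<epsilon>" "\<forall>k\<ge>L. u k = 0"
      "summable (\<lambda>k. norm (y k))" "(\<Sum>k. norm (y k)) \<le> \<epsilon>" and S: "(\<lambda>k. u k + y k) \<in> S"
    then have "N (\<lambda>k. u k + y k - x0 k) < \<rho>" using approx by blast
    then show "(\<lambda>k. u k + y k) \<in> U" using \<rho>(2) S by auto
  qed (rule \<epsilon>)
qed

section \<open>Lowest-order terms of polynomials\<close>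

text \<open>For \<open>P = 0\<close> the \<open>LEAST\<close> below is unspecified; the lemmas about it assume \<open>P \<noteq> 0\<close>.\<close>

definition low_degree :: "'a::zero poly \<Rightarrow> nat" where
  "low_degree P = (LEAST i. coeff P i \<noteq> 0)"

definition coeff_norm_sum :: "'a::real_normed_vector poly \<Rightarrow> real" where
  "coeff_norm_sum P = (\<Sum>i\<le>degree P. norm (coeff P i))"

lemma coeff_low_degree_nonzero: "P \<noteq> 0 \<Longrightarrow> coeff P (low_degree P) \<noteq> 0"
  unfolding low_degree_def by (rule LeastI[of _ "degree P"]) (rule leading_coeff_neq_0)

lemma coeff_less_low_degree: "i < low_degree P \<Longrightarrow> coeff P i = 0"
  unfolding low_degree_def using not_less_Least by blast

lemma low_degree_le_degree: "P \<noteq> 0 \<Longrightarrow> low_degree P \<le> degree P"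
  using le_degree coeff_low_degree_nonzero by blast

lemma low_degree_pos: "P \<noteq> 0 \<Longrightarrow> coeff P 0 = 0 \<Longrightarrow> 0 < low_degree P"
  using coeff_low_degree_nonzero by (metis gr0I)

lemma coeff_norm_sum_nonneg: "0 \<le> coeff_norm_sum P"
  unfolding coeff_norm_sum_def by (simp add: sum_nonneg)

lemma norm_poly_le_low_degree:
  fixes P :: "'a::real_normed_field poly"
  assumes "norm z \<le> 1"
  shows "norm (poly P z) \<le> coeff_norm_sum P * norm z ^ low_degree P"
proof -
  have "norm (poly P z) \<le> (\<Sum>i\<le>degree P. norm (coeff P i * z ^ i))"
    unfolding poly_altdef by (rule norm_sum)
  also have "\<dots> \<le> (\<Sum>i\<le>degree P. norm (coeff P i) * norm z ^ low_degree P)"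
  proof (rule sum_mono)
    fix i
    show "norm (coeff P i * z ^ i) \<le> norm (coeff P i) * norm z ^ low_degree P"
    proof (cases "i < low_degree P")
      case False
      then have "norm z ^ i \<le> norm z ^ low_degree P" using assms by (intro power_decreasing) auto
      then show ?thesis by (simp add: norm_mult norm_power mult_left_mono)
    qed (simp add: coeff_less_low_degree)
  qed
  also have "\<dots> = coeff_norm_sum P * norm z ^ low_degree P"
    by (simp add: coeff_norm_sum_def sum_distrib_right)
  finally show ?thesis .
qed

lemma norm_poly_le_if_coeff_0:
  fixes P :: "'a::real_normed_field poly"
  assumes "norm z \<le> 1" "coeff P 0 = 0"
  shows "norm (poly P z) \<le> coeff_norm_sum P * norm z"
proof (cases "P = 0")
  case False
  have "norm (poly P z) \<le> coeff_norm_sum P * norm z ^ low_degree P"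
    by (rule norm_poly_le_low_degree[OF assms(1)])
  also have "\<dots> \<le> coeff_norm_sum P * norm z ^ 1"
    using assms low_degree_pos[OF False] coeff_norm_sum_nonneg[of P]
    by (intro mult_left_mono power_decreasing) auto
  finally show ?thesis by simp
qed (simp add: coeff_norm_sum_nonneg)

lemma norm_poly_minus_lowest_term_le:
  fixes P :: "'a::real_normed_field poly"
  assumes "norm z \<le> 1" "P \<noteq> 0"
  shows "norm (poly P z - coeff P (low_degree P) * z ^ low_degree P)
    \<le> coeff_norm_sum P * norm z ^ Suc (low_degree P)"
proof -
  let ?d = "low_degree P" and ?I = "{..degree P} - {low_degree P}"
  have "?d \<in> {..degree P}" using low_degree_le_degree[OF assms(2)] by simp
  then have "poly P z - coeff P ?d * z ^ ?d = (\<Sum>i\<in>?I. coeff P i * z ^ i)"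
    by (simp add: poly_altdef sum.remove)
  also have "norm \<dots> \<le> (\<Sum>i\<in>?I. norm (coeff P i * z ^ i))" by (rule norm_sum)
  also have "\<dots> \<le> (\<Sum>i\<in>?I. norm (coeff P i) * norm z ^ Suc ?d)"
  proof (rule sum_mono)
    fix i assume i: "i \<in> ?I"
    show "norm (coeff P i * z ^ i) \<le> norm (coeff P i) * norm z ^ Suc ?d"
    proof (cases "i < ?d")
      case False
      then have "norm z ^ i \<le> norm z ^ Suc ?d" using i assms by (intro power_decreasing) auto
      then show ?thesis by (simp add: norm_mult norm_power mult_left_mono)
    qed (simp add: coeff_less_low_degree)
  qed
  also have "\<dots> \<le> (\<Sum>i\<le>degree P. norm (coeff P i) * norm z ^ Suc ?d)"
    by (rule sum_mono2) auto
  also have "\<dots> = coeff_norm_sum P * norm z ^ Suc ?d"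
    by (simp add: coeff_norm_sum_def sum_distrib_right)
  finally show ?thesis .
qed

section \<open>Dyadic targets\<close>

text \<open>A target \<open>(ws, \<kappa>)\<close> stands for the complex vector with entries \<open>(a + b\<i>) / 2\<^sup>\<kappa>\<close>,
  \<open>(a, b)\<close> ranging over the list \<open>ws\<close>.\<close>

type_synonym target = "(int \<times> int) list \<times> nat"

definition target_len :: "target \<Rightarrow> nat" where
  "target_len t = length (fst t)"

definition target_vec :: "target \<Rightarrow> nat \<Rightarrow> complex" where
  "target_vec t m = (if m < target_len t
     then Complex (of_int (fst (fst t ! m))) (of_int (snd (fst t ! m))) / 2 ^ snd t else 0)"

definition target_weight :: "target \<Rightarrow> real" where
  "target_weight t = 1 + (\<Sum>m<target_len t. norm (target_vec t m))"

definition round_target :: "nat \<Rightarrow> nat \<Rightarrow> (nat \<Rightarrow> complex) \<Rightarrow> target" where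
  "round_target \<kappa> L z = (map (\<lambda>m. (\<lfloor>2 ^ \<kappa> * Re (z m)\<rfloor>, \<lfloor>2 ^ \<kappa> * Im (z m)\<rfloor>)) [0..<L], \<kappa>)"

lemma target_weight_ge_1: "1 \<le> target_weight t"
  by (simp add: target_weight_def sum_nonneg)

lemma norm_target_vec_le_weight: "norm (target_vec t m) \<le> target_weight t"
proof (cases "m < target_len t")
  case True
  then have "norm (target_vec t m) \<le> (\<Sum>m<target_len t. norm (target_vec t m))"
    by (intro member_le_sum) auto
  then show ?thesis by (simp add: target_weight_def)
qed (use target_weight_ge_1[of t] in \<open>simp add: target_vec_def\<close>)

lemma target_vec_eq_0: "target_len t \<le> m \<Longrightarrow> target_vec t m = 0"
  by (simp add: target_vec_def)

lemma target_len_round_target [simp]: "target_len (round_target \<kappa> L z) = L"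
  by (simp add: target_len_def round_target_def)

lemma snd_round_target [simp]: "snd (round_target \<kappa> L z) = \<kappa>"
  by (simp add: round_target_def)

lemma norm_target_vec_round_target_le:
  assumes "m < L"
  shows "norm (target_vec (round_target \<kappa> L z) m - z m) \<le> 2 / 2 ^ \<kappa>"
proof -
  have "target_vec (round_target \<kappa> L z) m
      = Complex (of_int \<lfloor>2 ^ \<kappa> * Re (z m)\<rfloor>) (of_int \<lfloor>2 ^ \<kappa> * Im (z m)\<rfloor>) / 2 ^ \<kappa>"
    using assms by (simp add: target_vec_def round_target_def target_len_def)
  then show ?thesis using norm_dyadic_round_le by simp
qed

lemma exists_close_target:
  assumes "0 < \<epsilon>" "c \<noteq> 0"
  obtains t where "target_len t = L" "X / 2 ^ snd t \<le> \<epsilon>"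
    "\<forall>m<L. norm (c * target_vec t m - z m) \<le> \<epsilon>"
proof -
  have "eventually (\<lambda>\<kappa>. max X (2 * norm c) / \<epsilon> \<le> 2 ^ \<kappa>) sequentially"
    by (rule eventually_le_power) simp
  then obtain \<kappa> where "max X (2 * norm c) / \<epsilon> \<le> 2 ^ \<kappa>"
    using eventually_happens'[OF sequentially_bot] by blast
  then have "X \<le> \<epsilon> * 2 ^ \<kappa>" "2 * norm c \<le> \<epsilon> * 2 ^ \<kappa>"
    using assms(1) by (simp_all add: pos_divide_le_eq mult.commute)
  then have X: "X / 2 ^ \<kappa> \<le> \<epsilon>" and c: "norm c * (2 / 2 ^ \<kappa>) \<le> \<epsilon>"
    by (simp_all add: pos_divide_le_eq)
  let ?t = "round_target \<kappa> L (\<lambda>m. z m / c)"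
  have "norm (c * target_vec ?t m - z m) \<le> \<epsilon>" if "m < L" for m
  proof -
    have "c * target_vec ?t m - z m = c * (target_vec ?t m - z m / c)"
      using assms(2) by (simp add: field_simps)
    then have "norm (c * target_vec ?t m - z m) = norm c * norm (target_vec ?t m - z m / c)"
      by (simp add: norm_mult)
    also have "\<dots> \<le> norm c * (2 / 2 ^ \<kappa>)"
      using norm_target_vec_round_target_le[OF that] by (intro mult_left_mono) auto
    finally show ?thesis using c by linarith
  qed
  then show thesis using X by (intro that[of ?t]) auto
qed

section \<open>Epochs\<close>

text \<open>Write \<open>Suc e = 2\<^sup>a (2g - 1)\<close> and \<open>g = 2\<^sup>c (2i + 1)\<close>. Epoch \<open>e\<close> serves the degree \<open>a + 1\<close>
  and the \<open>c\<close>-th target, and \<open>epoch_enum a t i\<close> is the \<open>i\<close>-th epoch serving \<open>a\<close> and \<open>t\<close>; these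
  epochs have density \<open>1 / 2 ^ (a + c + 2)\<close>. The growth factor \<open>8 \<cdot> 2\<^sup>a\<close> leaves room for the blocks of degree \<open>a + 1\<close>,
  while \<open>epoch_start E \<le> 16\<^sup>E\<close> keeps the logarithmic length of every epoch bounded.\<close>

definition epoch_val :: "nat \<Rightarrow> nat" where
  "epoch_val e = multiplicity 2 (Suc e)"

definition epoch_deg :: "nat \<Rightarrow> nat" where
  "epoch_deg e = Suc (epoch_val e)"

definition epoch_target :: "nat \<Rightarrow> target" where
  "epoch_target e = from_nat (multiplicity 2 (Suc (Suc e div 2 ^ epoch_val e div 2)))"

primrec epoch_start :: "nat \<Rightarrow> nat" where
  "epoch_start 0 = 1"
| "epoch_start (Suc e) = 8 * 2 ^ epoch_val e * epoch_start e"

definition epoch_of :: "nat \<Rightarrow> nat" where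
  "epoch_of q = (LEAST e. q < epoch_start (Suc e))"

definition epoch_enum :: "nat \<Rightarrow> target \<Rightarrow> nat \<Rightarrow> nat" where
  "epoch_enum a t i = 2 ^ a * (2 * (2 ^ to_nat t * (2 * i + 1)) - 1) - 1"

definition epoch_period :: "nat \<Rightarrow> target \<Rightarrow> nat" where
  "epoch_period a t = 2 ^ (a + to_nat t + 2)"

lemma multiplicity_two_times_odd: "odd m \<Longrightarrow> multiplicity (2::nat) (2 ^ a * m) = a"
  by (simp add: prime_elem_multiplicity_mult_distrib not_dvd_imp_multiplicity_0 odd_pos)

lemma sum_multiplicity_two_le: "(\<Sum>i=1..n. multiplicity (2::nat) i) \<le> n"
proof (induction n rule: less_induct)
  case (less n)
  have double: "(\<Sum>i=1..2*m. multiplicity (2::nat) i) = m + (\<Sum>i=1..m. multiplicity 2 i)" for m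
  proof (induction m)
    case (Suc m)
    have "multiplicity (2::nat) (Suc (2 * m)) = 0" by (simp add: not_dvd_imp_multiplicity_0)
    moreover have "multiplicity (2::nat) (2 * Suc m) = Suc (multiplicity 2 (Suc m))"
      by (rule multiplicity_times_same) (auto simp: nat_dvd_1_iff_1)
    moreover have "2 * Suc m = Suc (Suc (2 * m))" by simp
    ultimately show ?case using Suc by (simp del: mult_Suc_right)
  qed simp
  show ?case
  proof (cases "n = 0")
    case False
    obtain m where m: "n = 2 * m \<or> n = Suc (2 * m)" by (metis oddE evenE Suc_eq_plus1)
    then have "(\<Sum>i=1..2*m. multiplicity (2::nat) i) \<le> 2 * m"
      using double[of m] less.IH[of m] False by auto
    moreover have "multiplicity (2::nat) (Suc (2 * m)) = 0" by (simp add: not_dvd_imp_multiplicity_0)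
    ultimately show ?thesis using m by auto
  qed simp
qed

lemma epoch_start_pos: "0 < epoch_start e"
  by (induction e) auto

lemma epoch_start_less_Suc: "epoch_start e < epoch_start (Suc e)"
proof -
  have "1 \<le> (2::nat) ^ epoch_val e" by simp
  from mult_le_mono1[OF this, of "8 * epoch_start e"]
  have "8 * epoch_start e \<le> epoch_start (Suc e)" by (simp add: algebra_simps)
  moreover have "epoch_start e < 8 * epoch_start e" using epoch_start_pos[of e] by simp
  ultimately show ?thesis by linarith
qed

lemma strict_mono_epoch_start: "strict_mono epoch_start"
  by (rule strict_monoI_Suc) (rule epoch_start_less_Suc)

lemma epoch_start_mono: "e \<le> e' \<Longrightarrow> epoch_start e \<le> epoch_start e'"
  using strict_mono_epoch_start by (simp add: strict_mono_less_eq)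

lemma epoch_start_ge: "Suc e \<le> epoch_start e"
proof (induction e)
  case (Suc e)
  then show ?case using epoch_start_less_Suc[of e] by linarith
qed simp

lemma epoch_start_le_16_power: "epoch_start E \<le> 16 ^ E"
proof -
  have "epoch_start E = 8 ^ E * 2 ^ (\<Sum>e<E. epoch_val e)"
    by (induction E) (auto simp: power_add)
  also have "(\<Sum>e<E. epoch_val e) = (\<Sum>i=1..E. multiplicity (2::nat) i)"
    unfolding epoch_val_def by (induction E) auto
  also have "(2::nat) ^ \<dots> \<le> 2 ^ E" using sum_multiplicity_two_le by (intro power_increasing) auto
  finally show ?thesis by (simp flip: power_mult_distrib)
qed

lemma five_deg_start_less: "5 * epoch_deg e * epoch_start e < epoch_start (Suc e)"
proof -
  have "epoch_deg e \<le> 2 ^ epoch_val e"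
    using less_exp[of "epoch_val e"] by (simp add: epoch_deg_def Suc_le_eq)
  then have "5 * epoch_deg e * epoch_start e \<le> 5 * 2 ^ epoch_val e * epoch_start e" by simp
  also have "\<dots> < 8 * 2 ^ epoch_val e * epoch_start e" using epoch_start_pos[of e] by simp
  finally show ?thesis by simp
qed

lemma epoch_of_eqI:
  assumes "epoch_start e \<le> q" "q < epoch_start (Suc e)"
  shows "epoch_of q = e"
  unfolding epoch_of_def
proof (rule Least_equality)
  show "e \<le> e'" if "q < epoch_start (Suc e')" for e'
  proof (rule ccontr)
    assume "\<not> e \<le> e'"
    then have "epoch_start (Suc e') \<le> epoch_start e"
      by (intro epoch_start_mono) simp
    then show False using assms that by simp
  qed
qed (rule assms(2))

lemma epoch_of_bounds:
  assumes "1 \<le> q"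
  shows "epoch_start (epoch_of q) \<le> q" "q < epoch_start (Suc (epoch_of q))"
proof -
  show up: "q < epoch_start (Suc (epoch_of q))"
    unfolding epoch_of_def by (rule LeastI[of _ q]) (use epoch_start_ge[of "Suc q"] in simp)
  show "epoch_start (epoch_of q) \<le> q"
  proof (cases "epoch_of q")
    case (Suc e')
    have "\<not> q < epoch_start (Suc e')"
    proof
      assume "q < epoch_start (Suc e')"
      then have "epoch_of q \<le> e'" unfolding epoch_of_def by (rule Least_le)
      then show False using Suc by simp
    qed
    then show ?thesis using Suc by simp
  qed (use assms in simp)
qed

lemma Suc_epoch_enum: "Suc (epoch_enum a t i) = 2 ^ a * (2 * (2 ^ to_nat t * (2 * i + 1)) - 1)"
proof -
  have "1 \<le> (2::nat) ^ to_nat t * (2 * i + 1)" by (simp add: Suc_le_eq)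
  then have "1 \<le> 2 * (2 ^ to_nat t * (2 * i + 1)) - 1" by linarith
  then have "1 \<le> 2 ^ a * (2 * (2 ^ to_nat t * (2 * i + 1)) - 1)" by (simp add: Suc_le_eq)
  then show ?thesis by (simp add: epoch_enum_def)
qed

lemma epoch_val_enum [simp]: "epoch_val (epoch_enum a t i) = a"
  unfolding epoch_val_def Suc_epoch_enum by (rule multiplicity_two_times_odd) simp

lemma epoch_target_enum [simp]: "epoch_target (epoch_enum a t i) = t"
proof -
  let ?g = "2 ^ to_nat t * (2 * i + 1) :: nat"
  have "Suc (epoch_enum a t i) div 2 ^ a div 2 = ?g - 1"
    unfolding Suc_epoch_enum by simp
  moreover have "Suc (?g - 1) = ?g" by simp
  moreover have "multiplicity (2::nat) ?g = to_nat t" by (rule multiplicity_two_times_odd) simp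
  ultimately show ?thesis by (simp add: epoch_target_def)
qed

lemma strict_mono_epoch_enum: "strict_mono (epoch_enum a t)"
proof (rule strict_monoI_Suc)
  fix i
  have "(2::nat) ^ to_nat t * (2 * i + 1) < 2 ^ to_nat t * (2 * Suc i + 1)" by simp
  moreover have "1 \<le> (2::nat) ^ to_nat t * (2 * i + 1)" by (simp add: Suc_le_eq)
  ultimately have "2 * (2 ^ to_nat t * (2 * i + 1)) - 1 < 2 * (2 ^ to_nat t * (2 * Suc i + 1)) - (1::nat)"
    by linarith
  then have "Suc (epoch_enum a t i) < Suc (epoch_enum a t (Suc i))"
    unfolding Suc_epoch_enum by simp
  then show "epoch_enum a t i < epoch_enum a t (Suc i)" by simp
qed

lemma epoch_enum_ge: "i \<le> epoch_enum a t i"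
  using strict_mono_imp_increasing[OF strict_mono_epoch_enum] by blast

lemma epoch_enum_less:
  assumes "i < E div epoch_period a t"
  shows "epoch_enum a t i < E"
proof -
  have "Suc (epoch_enum a t i) \<le> 2 ^ (a + to_nat t + 1) * (2 * i + 1)"
    unfolding Suc_epoch_enum by (simp add: power_add algebra_simps)
  also have "\<dots> < epoch_period a t * Suc i"
    by (simp add: epoch_period_def power_add algebra_simps)
  also have "\<dots> \<le> epoch_period a t * (E div epoch_period a t)"
    using assms by (intro mult_le_mono2) simp
  also have "\<dots> \<le> E" by simp
  finally show ?thesis by simp
qed

lemma harm_le_epoch:
  assumes "1 \<le> N" "N < epoch_start (Suc E)"
  shows "(\<Sum>n=1..N. 1 / real n) \<le> 4 * real E + 5"
proof -
  have "(\<Sum>n=1..N. 1 / real n) = harm N" by (simp add: harm_def inverse_eq_divide)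
  also have "\<dots> \<le> ln (real N) + 1"
    using euler_mascheroni_sequence_decreasing[of 1 N] assms(1) by (simp add: harm_def)
  also have "ln (real N) \<le> ln (16 ^ Suc E)"
  proof -
    have "N \<le> 16 ^ Suc E" using assms(2) epoch_start_le_16_power[of "Suc E"] by linarith
    then have "real N \<le> 16 ^ Suc E" by (metis of_nat_le_iff of_nat_numeral of_nat_power)
    then show ?thesis using assms(1) by simp
  qed
  also have "ln ((16::real) ^ Suc E) = real (Suc E) * ln 16" by (rule ln_realpow)
  also have "ln (16::real) = 4 * ln 2" using ln_realpow[of 2 4] by simp
  also have "real (Suc E) * (4 * ln 2) \<le> real (Suc E) * 4"
    using ln_2_less_1 by (intro mult_left_mono) auto
  finally show ?thesis by simp
qed

section \<open>The generating vector\<close>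

locale scaled_shift =
  fixes lam :: complex
  assumes norm_lam_gt_1: "1 < norm lam"
begin

lemma norm_lam_pos: "0 < norm lam"
  using norm_lam_gt_1 by linarith

lemma lam_nonzero: "lam \<noteq> 0"
  using norm_lam_gt_1 by auto

text \<open>After \<open>block_len t\<close> further shifts, a block carrying the target \<open>t\<close> is damped below the
  precision \<open>1 / 2 ^ \<kappa>\<close> of \<open>t\<close>.\<close>

definition block_len :: "target \<Rightarrow> nat" where
  "block_len t = (LEAST K. target_len t < K \<and>
     target_weight t * norm lam ^ target_len t * 2 ^ snd t \<le> norm lam ^ K)"

lemma block_len:
  "target_len t < block_len t"
  "target_weight t * norm lam ^ target_len t * 2 ^ snd t \<le> norm lam ^ block_len t"
proof -
  obtain S where S: "\<forall>s\<ge>S. target_weight t * norm lam ^ target_len t * 2 ^ snd t \<le> norm lam ^ s"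
    using eventually_le_power[OF norm_lam_gt_1] unfolding eventually_sequentially by blast
  let ?K = "max S (Suc (target_len t))"
  have "target_len t < ?K \<and> target_weight t * norm lam ^ target_len t * 2 ^ snd t \<le> norm lam ^ ?K"
    using S by auto
  then have "target_len t < block_len t \<and>
      target_weight t * norm lam ^ target_len t * 2 ^ snd t \<le> norm lam ^ block_len t"
    unfolding block_len_def by (rule LeastI)
  then show "target_len t < block_len t"
    "target_weight t * norm lam ^ target_len t * 2 ^ snd t \<le> norm lam ^ block_len t"
    by auto
qed

lemma block_len_pos: "0 < block_len t"
  using block_len(1)[of t] by simp

text \<open>In an epoch starting at \<open>s\<close>, the first condition leaves room for many blocks, the second
  makes the roots placed by the generator smaller than \<open>1 / norm lam ^ (3 s)\<close>, and the third makes this smaller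
  than \<open>1 / ((q + 1) (q + 2))\<close> at every position \<open>q\<close> of the epoch.\<close>

definition admissible :: "nat \<Rightarrow> target \<Rightarrow> nat \<Rightarrow> bool" where
  "admissible a t s \<longleftrightarrow> 2 * block_len t \<le> s \<and> target_weight t \<le> norm lam ^ s \<and>
     (8 * 2 ^ a * real s + 2)\<^sup>2 \<le> norm lam ^ s"

lemma eventually_admissible: "eventually (admissible a t) sequentially"
proof -
  have "eventually (\<lambda>s. 2 * block_len t \<le> s) sequentially" by (rule eventually_ge_at_top)
  moreover have "eventually (\<lambda>s. target_weight t \<le> norm lam ^ s) sequentially"
    by (rule eventually_le_power[OF norm_lam_gt_1])
  moreover have "eventually (\<lambda>s. (8 * 2 ^ a * real s + 2)\<^sup>2 \<le> norm lam ^ s) sequentially"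
    by (rule eventually_square_linear_le_power[OF norm_lam_gt_1]) auto
  ultimately show ?thesis unfolding admissible_def by eventually_elim blast
qed

definition active :: "nat \<Rightarrow> bool" where
  "active e \<longleftrightarrow> admissible (epoch_val e) (epoch_target e) (epoch_start e)"

text \<open>The blocks of an active epoch \<open>e\<close> start at \<open>block_start e i\<close>, \<open>i < block_count e\<close>, and lie
  in \<open>[4 d s, 5 d s)\<close> for \<open>d = epoch_deg e\<close> and \<open>s = epoch_start e\<close>. On the first \<open>target_len\<close>
  positions of the block starting at \<open>n\<close> the generator is a \<open>d\<close>-th root of the target divided by
  \<open>lam\<^sup>n\<close>; everywhere else it vanishes.\<close>

definition block_start :: "nat \<Rightarrow> nat \<Rightarrow> nat" where
  "block_start e i = 4 * epoch_deg e * epoch_start e + block_len (epoch_target e) * i"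

definition block_count :: "nat \<Rightarrow> nat" where
  "block_count e = epoch_deg e * epoch_start e div block_len (epoch_target e)"

definition generator :: "nat \<Rightarrow> complex" where
  "generator q = (let e = epoch_of q; t = epoch_target e; j = q - block_start e 0 in
     if active e \<and> block_start e 0 \<le> q \<and> j div block_len t < block_count e \<and> j mod block_len t < target_len t
     then (target_vec t (j mod block_len t) / lam ^ block_start e (j div block_len t))
       powr (1 / of_nat (epoch_deg e))
     else 0)"

lemma epoch_start_le_block_start: "epoch_start e \<le> block_start e i"
proof -
  have "1 * epoch_start e \<le> (4 * epoch_deg e) * epoch_start e"
    by (intro mult_le_mono1) (simp add: epoch_deg_def)
  then show ?thesis unfolding block_start_def by linarith
qed

lemma block_start_less:
  assumes "i < block_count e" "m < block_len (epoch_target e)"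
  shows "block_start e i + m < 5 * epoch_deg e * epoch_start e"
proof -
  let ?K = "block_len (epoch_target e)"
  have "?K * i + m < ?K * Suc i" using assms(2) by simp
  also have "\<dots> \<le> ?K * block_count e" using assms(1) by (intro mult_le_mono2) simp
  also have "\<dots> \<le> epoch_deg e * epoch_start e" by (simp add: block_count_def)
  finally show ?thesis by (simp add: block_start_def)
qed

lemma block_start_less_epoch_start:
  assumes "i < block_count e" "m < block_len (epoch_target e)"
  shows "block_start e i + m < epoch_start (Suc e)"
  using block_start_less[OF assms] five_deg_start_less[of e] by linarith

lemma epoch_of_block_start:
  assumes "i < block_count e" "m < block_len (epoch_target e)"
  shows "epoch_of (block_start e i + m) = e"
  using epoch_start_le_block_start[of e i] block_start_less_epoch_start[OF assms]
  by (intro epoch_of_eqI) auto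

lemma generator_block:
  assumes "active e" "i < block_count e" "m < target_len (epoch_target e)"
  shows "generator (block_start e i + m)
    = (target_vec (epoch_target e) m / lam ^ block_start e i) powr (1 / of_nat (epoch_deg e))"
proof -
  let ?K = "block_len (epoch_target e)"
  have mK: "m < ?K" using assms(3) block_len(1) less_trans by blast
  have j: "block_start e i + m - block_start e 0 = ?K * i + m"
    by (simp add: block_start_def)
  have "(?K * i + m) div ?K = i" "(?K * i + m) mod ?K = m" using mK by auto
  then show ?thesis
    using assms epoch_of_block_start[OF assms(2) mK]
    unfolding generator_def Let_def j by (simp add: block_start_def)
qed

lemma generator_nonzeroE:
  assumes "generator q \<noteq> 0"
  obtains e i m where "active e" "i < block_count e" "m < target_len (epoch_target e)"
    "q = block_start e i + m" "epoch_of q = e"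
proof -
  let ?e = "epoch_of q"
  let ?K = "block_len (epoch_target ?e)" and ?j = "q - block_start ?e 0"
  have c: "active ?e" "block_start ?e 0 \<le> q" "?j div ?K < block_count ?e"
    "?j mod ?K < target_len (epoch_target ?e)"
    using assms by (auto simp: generator_def Let_def split: if_splits)
  have "q = block_start ?e (?j div ?K) + ?j mod ?K"
    using c(2) by (simp add: block_start_def)
  with c that show ?thesis by blast
qed

lemma block_count_ge:
  assumes "active e"
  shows "real (epoch_deg e * epoch_start e) / (2 * real (block_len (epoch_target e)))
    \<le> real (block_count e)"
proof -
  let ?x = "epoch_deg e * epoch_start e" and ?K = "block_len (epoch_target e)"
  have K: "0 < ?K" by (rule block_len_pos)
  have "2 * ?K \<le> epoch_start e" using assms by (simp add: active_def admissible_def)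
  moreover have "epoch_start e \<le> ?x" by (simp add: epoch_deg_def)
  ultimately have "2 * real ?K \<le> real ?x" by (metis of_nat_le_iff of_nat_mult of_nat_numeral order_trans)
  then have "real ?x / (2 * real ?K) \<le> real ?x / real ?K - 1"
    using K by (simp add: field_simps)
  also have "\<dots> < real (?x div ?K)"
  proof -
    have "?x < ?K * (?x div ?K + 1)"
      using dividend_less_times_div[OF K, of ?x] by (simp add: algebra_simps)
    then have "real ?x < real (?K * (?x div ?K + 1))" by (simp only: of_nat_less_iff)
    then have "real ?x < real ?K * (real (?x div ?K) + 1)"
      by (simp only: of_nat_mult of_nat_add of_nat_1)
    then show ?thesis using K by (simp add: field_simps)
  qed
  finally show ?thesis by (simp add: block_count_def)
qed

lemma block_count_pos:
  assumes "active e"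
  shows "0 < block_count e"
proof -
  have "0 < epoch_deg e * epoch_start e"
    using epoch_start_pos[of e] by (simp add: epoch_deg_def)
  then have "0 < real (epoch_deg e * epoch_start e) / (2 * real (block_len (epoch_target e)))"
    using block_len_pos[of "epoch_target e"] by simp
  then show ?thesis using block_count_ge[OF assms] by linarith
qed

lemma norm_block_root_le:
  assumes "active e"
  shows "norm ((target_vec (epoch_target e) m / lam ^ block_start e i) powr (1 / of_nat (epoch_deg e)))
    \<le> 1 / norm lam ^ (3 * epoch_start e)"
proof -
  let ?w = "(target_vec (epoch_target e) m / lam ^ block_start e i) powr (1 / of_nat (epoch_deg e))"
  let ?r = "norm lam" and ?s = "epoch_start e" and ?d = "epoch_deg e"
  have r: "1 < ?r" by (rule norm_lam_gt_1)
  then have r0: "0 < ?r" by linarith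
  have d: "0 < ?d" by (simp add: epoch_deg_def)
  have w: "norm ?w ^ ?d = norm (target_vec (epoch_target e) m) / ?r ^ block_start e i"
    by (simp add: norm_power[symmetric] powr_inverse_of_nat_power[OF d] norm_divide)
  have "norm (target_vec (epoch_target e) m) \<le> target_weight (epoch_target e)"
    by (rule norm_target_vec_le_weight)
  also have "\<dots> \<le> ?r ^ ?s" using assms by (simp add: active_def admissible_def)
  also have "\<dots> \<le> ?r ^ (?d * ?s)" using r d by (intro power_increasing) auto
  finally have "norm ?w ^ ?d \<le> ?r ^ (?d * ?s) / ?r ^ block_start e i"
    unfolding w using r by (intro divide_right_mono) auto
  also have "\<dots> \<le> ?r ^ (?d * ?s) / ?r ^ (4 * (?d * ?s))"
  proof -
    have "4 * (?d * ?s) \<le> block_start e i" by (simp add: block_start_def)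
    then have "?r ^ (4 * (?d * ?s)) \<le> ?r ^ block_start e i" using r by (intro power_increasing) auto
    then show ?thesis using r0 by (intro divide_left_mono) auto
  qed
  also have "\<dots> = 1 / ?r ^ (3 * (?d * ?s))"
  proof -
    have "?r ^ (4 * (?d * ?s)) = ?r ^ (?d * ?s) * ?r ^ (3 * (?d * ?s))"
      by (simp add: power_add[symmetric])
    then show ?thesis using r by simp
  qed
  also have "\<dots> = (1 / ?r ^ (3 * ?s)) ^ ?d"
    by (simp add: power_mult[symmetric] power_divide mult.commute mult.left_commute)
  finally have "norm ?w ^ Suc (epoch_val e) \<le> (1 / ?r ^ (3 * ?s)) ^ Suc (epoch_val e)"
    by (simp add: epoch_deg_def)
  then show ?thesis by (rule power_le_imp_le_base) (use r0 in simp)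
qed

lemma norm_generator_le: "norm (generator q) \<le> 1 / norm lam ^ (3 * epoch_start (epoch_of q))"
proof (cases "generator q = 0")
  case False
  then obtain e i m where "active e" "i < block_count e" "m < target_len (epoch_target e)"
    "q = block_start e i + m" "epoch_of q = e"
    by (rule generator_nonzeroE)
  then show ?thesis using generator_block norm_block_root_le by simp
qed simp

lemma active_square_le:
  assumes "active e" "q < epoch_start (Suc e)"
  shows "(real q + 1) * (real q + 2) \<le> norm lam ^ epoch_start e"
proof -
  have "real q \<le> real (epoch_start (Suc e))" using assms(2) by (simp del: epoch_start.simps)
  then have "real q + 2 \<le> 8 * 2 ^ epoch_val e * real (epoch_start e) + 2" by simp
  then have "(real q + 1) * (real q + 2) \<le> (8 * 2 ^ epoch_val e * real (epoch_start e) + 2)\<^sup>2"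
    unfolding power2_eq_square by (intro mult_mono) auto
  also have "\<dots> \<le> norm lam ^ epoch_start e"
    using assms(1) by (simp add: active_def admissible_def)
  finally show ?thesis .
qed

lemma norm_generator_le_inverse_square: "norm (generator q) \<le> 1 / ((real q + 1) * (real q + 2))"
proof (cases "generator q = 0")
  case False
  then obtain e i m where e: "active e" "i < block_count e" "m < target_len (epoch_target e)"
    "q = block_start e i + m" "epoch_of q = e"
    by (rule generator_nonzeroE)
  then have "q < epoch_start (Suc e)"
    using block_start_less_epoch_start block_len(1) less_trans by blast
  then have sq: "(real q + 1) * (real q + 2) \<le> norm lam ^ epoch_start e"
    by (rule active_square_le[OF e(1)])
  have "norm (generator q) \<le> 1 / norm lam ^ (3 * epoch_start e)"
    using norm_generator_le[of q] e(5) by simp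
  also have "\<dots> \<le> 1 / norm lam ^ epoch_start e"
    using norm_lam_gt_1 norm_lam_pos by (intro divide_left_mono power_increasing) auto
  also have "\<dots> \<le> 1 / ((real q + 1) * (real q + 2))"
    using sq norm_lam_pos by (intro divide_left_mono) auto
  finally show ?thesis .
qed simp

lemma norm_generator_le_1: "norm (generator q) \<le> 1"
proof -
  have "1 * 1 \<le> (real q + 1) * (real q + 2)" by (intro mult_mono) auto
  then have "1 / ((real q + 1) * (real q + 2)) \<le> 1" by simp
  then show ?thesis using norm_generator_le_inverse_square[of q] by linarith
qed

definition generated_algebra :: "(nat \<Rightarrow> complex) set" where
  "generated_algebra = {f. \<exists>P. coeff P 0 = 0 \<and> f = (\<lambda>q. poly P (generator q))}"

lemma generated_algebra_subset_l1_space: "generated_algebra \<subseteq> l1_space"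
proof
  fix f assume "f \<in> generated_algebra"
  then obtain P where P: "coeff P 0 = 0" "f = (\<lambda>q. poly P (generator q))"
    by (auto simp: generated_algebra_def)
  have bound: "norm (norm (f q)) \<le> coeff_norm_sum P * (1 / ((real q + 1) * (real q + 2)))" for q
  proof -
    have "norm (f q) \<le> coeff_norm_sum P * norm (generator q)"
      using norm_poly_le_if_coeff_0[OF norm_generator_le_1 P(1)] P(2) by simp
    also have "\<dots> \<le> coeff_norm_sum P * (1 / ((real q + 1) * (real q + 2)))"
      using norm_generator_le_inverse_square coeff_norm_sum_nonneg by (intro mult_left_mono) auto
    finally show ?thesis by simp
  qed
  have "summable (\<lambda>q. coeff_norm_sum P * (1 / ((real q + 1) * (real q + 2))))"
    by (intro summable_mult summable_inverse_consecutive_products)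
  then have "summable (\<lambda>q. norm (f q))"
    by (rule summable_comparison_test') (rule bound)
  then show "f \<in> l1_space" by (simp add: l1_space_def)
qed

lemma is_subalgebra_generated_algebra:
  assumes "l1_space \<subseteq> S"
  shows "is_subalgebra S generated_algebra"
  unfolding is_subalgebra_def
proof (intro conjI ballI allI)
  show "generated_algebra \<subseteq> S" using generated_algebra_subset_l1_space assms by blast
  show "(\<lambda>n. 0) \<in> generated_algebra" unfolding generated_algebra_def
    by (rule CollectI, rule exI[of _ 0]) simp
  fix f g assume "f \<in> generated_algebra" "g \<in> generated_algebra"
  then obtain P Q where P: "coeff P 0 = 0" "f = (\<lambda>q. poly P (generator q))"
    and Q: "coeff Q 0 = 0" "g = (\<lambda>q. poly Q (generator q))"
    by (auto simp: generated_algebra_def)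
  show "(\<lambda>n. f n + g n) \<in> generated_algebra" unfolding generated_algebra_def
    by (rule CollectI, rule exI[of _ "P + Q"]) (simp add: P Q)
  show "(\<lambda>n. f n * g n) \<in> generated_algebra" unfolding generated_algebra_def
    by (rule CollectI, rule exI[of _ "P * Q"]) (simp add: P Q coeff_mult_0)
next
  fix c :: complex and f assume "f \<in> generated_algebra"
  then obtain P where P: "coeff P 0 = 0" "f = (\<lambda>q. poly P (generator q))"
    by (auto simp: generated_algebra_def)
  show "(\<lambda>n. c * f n) \<in> generated_algebra" unfolding generated_algebra_def
    by (rule CollectI, rule exI[of _ "smult c P"]) (simp add: P)
qed

lemma funpow_generated_algebra_in_l1_space:
  assumes "f \<in> generated_algebra"
  shows "((\<lambda>x n. lam * backward_shift x n) ^^ n) f \<in> l1_space"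
  using shift_scale_in_l1_space[of f "lam ^ n" n] generated_algebra_subset_l1_space assms
  by (auto simp: funpow_scaled_shift)

lemma generator_ne_zero: "generator \<noteq> (\<lambda>n. 0)"
proof -
  define t :: target where "t = ([(1, 0)], 0)"
  obtain s0 where s0: "\<forall>s\<ge>s0. admissible 0 t s"
    using eventually_admissible unfolding eventually_sequentially by blast
  define e where "e = epoch_enum 0 t s0"
  have "s0 \<le> epoch_start e"
    using epoch_enum_ge[of s0 0 t] epoch_start_ge[of e] by (simp add: e_def)
  then have act: "active e" using s0 by (simp add: active_def e_def)
  have "target_len (epoch_target e) = 1" "target_vec (epoch_target e) 0 = 1"
    by (simp_all add: e_def t_def target_len_def target_vec_def complex_eq_iff)
  then have "generator (block_start e 0 + 0) = (1 / lam ^ block_start e 0) powr (1 / of_nat (epoch_deg e))"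
    using generator_block[OF act block_count_pos[OF act]] by simp
  then have "generator (block_start e 0) \<noteq> 0" using lam_nonzero by simp
  then show ?thesis by auto
qed

context
  fixes P :: "complex poly" and e i :: nat
  assumes P: "P \<noteq> 0" "coeff P 0 = 0"
    and active: "active e" and deg: "epoch_deg e = low_degree P"
    and i: "i < block_count e"
begin

lemma shift_error_own_block:
  assumes k: "k < target_len (epoch_target e)"
  shows "norm (lam ^ block_start e i * poly P (generator (block_start e i + k))
      - coeff P (low_degree P) * target_vec (epoch_target e) k)
    \<le> coeff_norm_sum P * target_weight (epoch_target e) / norm lam ^ (3 * epoch_start e)"
proof -
  let ?n = "block_start e i" and ?v = "target_vec (epoch_target e) k" and ?d = "low_degree P"
  define w where "w = (?v / lam ^ ?n) powr (1 / of_nat ?d)"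
  have d: "0 < ?d" using low_degree_pos[OF P] .
  have gen: "generator (?n + k) = w"
    using generator_block[OF active i k] deg by (simp add: w_def)
  have w_le: "norm w \<le> 1 / norm lam ^ (3 * epoch_start e)"
    using norm_block_root_le[OF active] deg by (simp add: w_def)
  also have "\<dots> \<le> 1"
    using one_le_power[of "norm lam" "3 * epoch_start e"] norm_lam_gt_1 norm_lam_pos
    by (simp add: divide_le_eq_1)
  finally have w1: "norm w \<le> 1" .
  txt \<open>The lowest term of \<open>P\<close> reproduces the target exactly; the others are \<open>O(norm w ^ (d + 1))\<close>.\<close>
  have "w ^ ?d = ?v / lam ^ ?n" using powr_inverse_of_nat_power[OF d] by (simp add: w_def)
  then have "lam ^ ?n * poly P w - coeff P ?d * ?v = lam ^ ?n * (poly P w - coeff P ?d * w ^ ?d)"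
    using lam_nonzero by (simp add: algebra_simps)
  then have "norm (lam ^ ?n * poly P w - coeff P ?d * ?v)
      = norm lam ^ ?n * norm (poly P w - coeff P ?d * w ^ ?d)"
    by (simp add: norm_mult norm_power)
  also have "\<dots> \<le> norm lam ^ ?n * (coeff_norm_sum P * norm w ^ Suc ?d)"
    using norm_poly_minus_lowest_term_le[OF w1 P(1)] by (intro mult_left_mono) auto
  also have "\<dots> = coeff_norm_sum P * norm (norm lam ^ ?n * w ^ ?d) * norm w"
    by (simp add: norm_mult norm_power algebra_simps)
  also have "norm (norm lam ^ ?n * w ^ ?d) = norm ?v"
    using \<open>w ^ ?d = ?v / lam ^ ?n\<close> lam_nonzero by (simp add: norm_mult norm_divide norm_power)
  also have "coeff_norm_sum P * norm ?v * norm w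
      \<le> coeff_norm_sum P * target_weight (epoch_target e) * (1 / norm lam ^ (3 * epoch_start e))"
    using coeff_norm_sum_nonneg[of P] norm_target_vec_le_weight[of "epoch_target e" k]
      target_weight_ge_1[of "epoch_target e"] w_le
    by (intro mult_mono mult_left_mono) auto
  finally show ?thesis using gen by simp
qed

lemma shift_error_off_block:
  assumes "target_len (epoch_target e) \<le> k"
  shows "norm (lam ^ block_start e i * poly P (generator (block_start e i + k))
      - coeff P (low_degree P) * target_vec (epoch_target e) k)
    \<le> norm lam ^ block_start e i * (coeff_norm_sum P * norm (generator (block_start e i + k)) ^ low_degree P)"
  using assms norm_poly_le_low_degree[OF norm_generator_le_1, of P] norm_lam_pos
  by (simp add: target_vec_eq_0 norm_mult norm_power mult_left_mono)

lemma shift_error_same_epoch: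
  assumes k: "target_len (epoch_target e) \<le> k"
    and nz: "generator (block_start e i + k) \<noteq> 0" and same: "epoch_of (block_start e i + k) = e"
  shows "block_len (epoch_target e) \<le> k"
    "norm (lam ^ block_start e i * poly P (generator (block_start e i + k))
      - coeff P (low_degree P) * target_vec (epoch_target e) k)
    \<le> coeff_norm_sum P * target_weight (epoch_target e) * norm lam ^ target_len (epoch_target e)
      * (1 / norm lam) ^ k"
proof -
  let ?t = "epoch_target e" and ?r = "norm lam" and ?C = "coeff_norm_sum P"
  let ?K = "block_len ?t" and ?L = "target_len ?t" and ?n = "block_start e i"
  obtain i' m' where i': "i' < block_count e" "m' < ?L" "?n + k = block_start e i' + m'"
    using nz same by (elim generator_nonzeroE) auto
  have eq: "?K * i + k = ?K * i' + m'" using i'(3) by (simp add: block_start_def)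
  have "i < i'"
  proof (rule ccontr)
    assume "\<not> i < i'"
    then have "?K * i' \<le> ?K * i" by simp
    then show False using eq i'(2) k by linarith
  qed
  then have "?K * i + ?K \<le> ?K * i'" by (metis mult_Suc_right Suc_le_eq mult_le_mono2 add.commute)
  then show "?K \<le> k" using eq by linarith
  have nk: "?n + k < block_start e i' + ?L" using i' by linarith
  have "norm (generator (?n + k)) ^ low_degree P = norm (target_vec ?t m') / ?r ^ block_start e i'"
    using generator_block[OF active i'(1,2)] i'(3) deg
    by (simp add: norm_power[symmetric] powr_inverse_of_nat_power[OF low_degree_pos[OF P]] norm_divide)
  then have "?r ^ ?n * (?C * norm (generator (?n + k)) ^ low_degree P)
      = ?C * norm (target_vec ?t m') * (?r ^ ?n / ?r ^ block_start e i')"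
    by (simp add: field_simps)
  also have "\<dots> \<le> ?C * target_weight ?t * (?r ^ ?L * (1 / ?r) ^ k)"
  proof (rule mult_mono)
    show "?C * norm (target_vec ?t m') \<le> ?C * target_weight ?t"
      using coeff_norm_sum_nonneg norm_target_vec_le_weight by (intro mult_left_mono) auto
    have "?r ^ (?n + k) \<le> ?r ^ (block_start e i' + ?L)"
      using nk norm_lam_gt_1 by (intro power_increasing) auto
    then have "?r ^ ?n * ?r ^ k \<le> ?r ^ ?L * ?r ^ block_start e i'"
      by (simp add: power_add mult.commute)
    then show "?r ^ ?n / ?r ^ block_start e i' \<le> ?r ^ ?L * (1 / ?r) ^ k"
      using norm_lam_pos by (simp add: field_simps power_one_over)
  qed (use coeff_norm_sum_nonneg[of P] target_weight_ge_1[of ?t] norm_lam_pos in auto)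
  finally show "norm (lam ^ ?n * poly P (generator (?n + k)) - coeff P (low_degree P) * target_vec ?t k)
      \<le> ?C * target_weight ?t * ?r ^ ?L * (1 / ?r) ^ k"
    using shift_error_off_block[OF k] by (simp add: mult.assoc)
qed

lemma shift_error_later_epoch:
  assumes k: "target_len (epoch_target e) \<le> k"
    and nz: "generator (block_start e i + k) \<noteq> 0" and other: "epoch_of (block_start e i + k) \<noteq> e"
  shows "norm (lam ^ block_start e i * poly P (generator (block_start e i + k))
      - coeff P (low_degree P) * target_vec (epoch_target e) k)
    \<le> coeff_norm_sum P / norm lam ^ epoch_start (Suc e)
      * (1 / ((real (block_start e i) + real k + 1) * (real (block_start e i) + real k + 2)))"
proof -
  let ?r = "norm lam" and ?C = "coeff_norm_sum P" and ?n = "block_start e i"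
  let ?x = "generator (?n + k)" and ?e' = "epoch_of (?n + k)"
  let ?s1 = "epoch_start (Suc e)" and ?s' = "epoch_start ?e'"
  obtain i' m' where e': "active ?e'" "i' < block_count ?e'" "m' < target_len (epoch_target ?e')"
    "?n + k = block_start ?e' i' + m'"
    using nz by (elim generator_nonzeroE) auto
  have "block_start ?e' i' + m' < epoch_start (Suc ?e')"
    using block_start_less_epoch_start[OF e'(2)] e'(3) block_len(1) less_trans by blast
  then have gt: "?n + k < epoch_start (Suc ?e')" using e'(4) by simp
  have "e < ?e'"
  proof (rule ccontr)
    assume "\<not> e < ?e'"
    then have "epoch_start (Suc ?e') \<le> epoch_start e" using other by (intro epoch_start_mono) simp
    then show False using gt epoch_start_le_block_start[of e i] by simp
  qed
  then have s1: "?s1 \<le> ?s'" by (intro epoch_start_mono) simp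
  have "?n + 0 < ?s1" by (rule block_start_less_epoch_start[OF i block_len_pos])
  then have n: "?r ^ ?n / ?r ^ ?s' \<le> 1"
    using s1 norm_lam_gt_1 norm_lam_pos by (simp add: power_increasing)
  have sq: "(real (?n + k) + 1) * (real (?n + k) + 2) \<le> ?r ^ ?s'"
    by (rule active_square_le[OF e'(1) gt])
  have "norm ?x ^ low_degree P \<le> norm ?x ^ 1"
    using low_degree_pos[OF P] norm_generator_le_1 by (intro power_decreasing) auto
  also have "\<dots> \<le> 1 / ?r ^ (3 * ?s')" using norm_generator_le by simp
  finally have "?r ^ ?n * (?C * norm ?x ^ low_degree P) \<le> ?r ^ ?n * (?C * (1 / ?r ^ (3 * ?s')))"
    using coeff_norm_sum_nonneg[of P] norm_lam_pos by (intro mult_left_mono) auto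
  also have "\<dots> = ?C * (?r ^ ?n / ?r ^ ?s') * (1 / ?r ^ ?s') * (1 / ?r ^ ?s')"
    by (simp add: power_add[symmetric] numeral_3_eq_3 ac_simps)
  also have "\<dots> \<le> ?C * 1 * (1 / ?r ^ ?s1) * (1 / ((real ?n + real k + 1) * (real ?n + real k + 2)))"
  proof (intro mult_mono)
    show "1 / ?r ^ ?s' \<le> 1 / ?r ^ ?s1"
      using s1 norm_lam_gt_1 norm_lam_pos by (intro divide_left_mono power_increasing) auto
    show "1 / ?r ^ ?s' \<le> 1 / ((real ?n + real k + 1) * (real ?n + real k + 2))"
      using sq norm_lam_pos by (intro divide_left_mono) auto
  qed (use n coeff_norm_sum_nonneg[of P] norm_lam_pos in auto)
  finally show ?thesis using shift_error_off_block[OF k] by simp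
qed

lemma shift_error_le:
  "norm (lam ^ block_start e i * poly P (generator (block_start e i + k))
      - coeff P (low_degree P) * target_vec (epoch_target e) k)
    \<le> (if k < target_len (epoch_target e)
        then coeff_norm_sum P * target_weight (epoch_target e) / norm lam ^ (3 * epoch_start e) else 0)
      + (if block_len (epoch_target e) \<le> k
        then coeff_norm_sum P * target_weight (epoch_target e) * norm lam ^ target_len (epoch_target e)
          * (1 / norm lam) ^ k else 0)
      + coeff_norm_sum P / norm lam ^ epoch_start (Suc e)
        * (1 / ((real (block_start e i) + real k + 1) * (real (block_start e i) + real k + 2)))"
  (is "?err \<le> ?A + ?B + ?C")
proof -
  have nonneg: "0 \<le> ?A" "0 \<le> ?B" "0 \<le> ?C"
    using coeff_norm_sum_nonneg[of P] target_weight_ge_1[of "epoch_target e"] norm_lam_pos by auto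
  consider (own) "k < target_len (epoch_target e)"
    | (zero) "target_len (epoch_target e) \<le> k" "generator (block_start e i + k) = 0"
    | (same) "target_len (epoch_target e) \<le> k" "generator (block_start e i + k) \<noteq> 0"
        "epoch_of (block_start e i + k) = e"
    | (later) "target_len (epoch_target e) \<le> k" "generator (block_start e i + k) \<noteq> 0"
        "epoch_of (block_start e i + k) \<noteq> e"
    by linarith
  then show ?thesis
  proof cases
    case own
    then have "?err \<le> ?A" using shift_error_own_block[OF own] by simp
    then show ?thesis using nonneg by linarith
  next
    case zero
    then have "?err \<le> 0"
      using shift_error_off_block[OF zero(1)] low_degree_pos[OF P] by (simp add: power_0_left)
    then show ?thesis using nonneg by linarith
  next
    case same
    then have "?err \<le> ?B" using shift_error_same_epoch[OF same] by simp
    then show ?thesis using nonneg by linarith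
  next
    case later
    then have "?err \<le> ?C" using shift_error_later_epoch[OF later] by simp
    then show ?thesis using nonneg by linarith
  qed
qed

lemma shift_error_l1:
  shows "summable (\<lambda>k. norm (lam ^ block_start e i * poly P (generator (block_start e i + k))
      - coeff P (low_degree P) * target_vec (epoch_target e) k))" (is "summable ?err")
    and "(\<Sum>k. norm (lam ^ block_start e i * poly P (generator (block_start e i + k))
      - coeff P (low_degree P) * target_vec (epoch_target e) k))
    \<le> coeff_norm_sum P * (real (target_len (epoch_target e)) * target_weight (epoch_target e)
          / norm lam ^ (3 * epoch_start e)
        + norm lam / (norm lam - 1) / 2 ^ snd (epoch_target e) + 1 / norm lam ^ epoch_start (Suc e))"
    (is "_ \<le> ?bound")
proof -
  let ?t = "epoch_target e" and ?r = "norm lam" and ?C = "coeff_norm_sum P" and ?n = "block_start e i"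
  let ?L = "target_len ?t" and ?K = "block_len ?t" and ?W = "target_weight ?t"
  have C: "0 \<le> ?C" by (rule coeff_norm_sum_nonneg)
  have W: "1 \<le> ?W" by (rule target_weight_ge_1)
  have r: "1 < ?r" "0 < ?r" using norm_lam_gt_1 norm_lam_pos .
  have partial: "(\<Sum>k<N. ?err k) \<le> ?bound" for N
  proof -
    let ?a = "?C * ?W / ?r ^ (3 * epoch_start e)" and ?b = "?C * ?W * ?r ^ ?L"
      and ?c = "?C / ?r ^ epoch_start (Suc e)"
    have "(\<Sum>k<N. ?err k) \<le> (\<Sum>k<N. (if k < ?L then ?a else 0)
        + (if ?K \<le> k then ?b * (1 / ?r) ^ k else 0)
        + ?c * (1 / ((real ?n + real k + 1) * (real ?n + real k + 2))))"
      by (rule sum_mono) (rule shift_error_le)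
    also have "\<dots> = (\<Sum>k<N. if k < ?L then ?a else 0)
        + ?b * (\<Sum>k<N. if ?K \<le> k then (1 / ?r) ^ k else 0)
        + ?c * (\<Sum>k<N. 1 / ((real ?n + real k + 1) * (real ?n + real k + 2)))"
      by (simp add: sum.distrib sum_distrib_left if_distrib[of "\<lambda>x. ?b * x"] cong: if_cong)
    also have "\<dots> \<le> real ?L * (?C * ?W / ?r ^ (3 * epoch_start e))
          + ?C * ?W * ?r ^ ?L * ((1 / ?r) ^ ?K / (1 - 1 / ?r)) + ?C / ?r ^ epoch_start (Suc e) * 1"
      using C W r
      by (intro add_mono mult_left_mono sum_if_less_le sum_geometric_tail_le
          sum_inverse_consecutive_products_le_1) auto
    also have "?C * ?W * ?r ^ ?L * ((1 / ?r) ^ ?K / (1 - 1 / ?r))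
        = ?C * (?W * ?r ^ ?L / ?r ^ ?K) * (?r / (?r - 1))"
      using r by (simp add: field_simps power_one_over)
    also have "\<dots> \<le> ?C * (1 / 2 ^ snd ?t) * (?r / (?r - 1))"
    proof -
      have "?W * ?r ^ ?L / ?r ^ ?K \<le> 1 / 2 ^ snd ?t"
        using block_len(2)[of ?t] r by (simp add: field_simps)
      then show ?thesis using C r by (intro mult_right_mono mult_left_mono) auto
    qed
    finally show ?thesis by (simp add: algebra_simps)
  qed
  show "summable ?err" by (rule summableI_nonneg_bounded[OF _ partial]) simp
  then show "(\<Sum>k. ?err k) \<le> ?bound" by (rule suminf_le_const[OF _ partial])
qed

lemma funpow_block_start:
  obtains y where
    "((\<lambda>x n. lam * backward_shift x n) ^^ block_start e i) (\<lambda>q. poly P (generator q))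
      = (\<lambda>k. coeff P (low_degree P) * target_vec (epoch_target e) k + y k)"
    "summable (\<lambda>k. norm (y k))"
    "(\<Sum>k. norm (y k)) \<le> coeff_norm_sum P * (real (target_len (epoch_target e)) * target_weight (epoch_target e)
          / norm lam ^ (3 * epoch_start e)
        + norm lam / (norm lam - 1) / 2 ^ snd (epoch_target e) + 1 / norm lam ^ epoch_start (Suc e))"
proof -
  have "((\<lambda>x n. lam * backward_shift x n) ^^ block_start e i) (\<lambda>q. poly P (generator q))
      = (\<lambda>k. coeff P (low_degree P) * target_vec (epoch_target e) k
        + (lam ^ block_start e i * poly P (generator (block_start e i + k))
          - coeff P (low_degree P) * target_vec (epoch_target e) k))"
    by (simp add: funpow_scaled_shift)
  then show thesis using shift_error_l1 by (rule that)
qed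

end

section \<open>Returning times\<close>

definition block_starts :: "nat \<Rightarrow> nat set" where
  "block_starts e = block_start e ` {..<block_count e}"

lemma eventually_epoch_error_le:
  assumes "0 < \<epsilon>" "0 \<le> B" "0 \<le> X"
  shows "eventually (\<lambda>e. B * (X / norm lam ^ (3 * epoch_start e) + 1 / norm lam ^ epoch_start (Suc e))
    \<le> \<epsilon>) sequentially"
proof -
  have "eventually (\<lambda>e. B * (X + 1) / \<epsilon> \<le> norm lam ^ epoch_start e) sequentially"
    by (rule eventually_compose_filterlim[OF eventually_le_power[OF norm_lam_gt_1]
          filterlim_subseq[OF strict_mono_epoch_start]])
  then show ?thesis
  proof eventually_elim
    case (elim e)
    let ?r = "norm lam" and ?s = "epoch_start e"
    have "X / ?r ^ (3 * ?s) \<le> X / ?r ^ ?s"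
      using assms norm_lam_gt_1 norm_lam_pos by (intro divide_left_mono power_increasing) auto
    moreover have "1 / ?r ^ epoch_start (Suc e) \<le> 1 / ?r ^ ?s"
      using epoch_start_less_Suc[of e] norm_lam_gt_1 norm_lam_pos
      by (intro divide_left_mono power_increasing) auto
    ultimately have "B * (X / ?r ^ (3 * ?s) + 1 / ?r ^ epoch_start (Suc e)) \<le> B * ((X + 1) / ?r ^ ?s)"
      using assms by (intro mult_left_mono) (auto simp: add_divide_distrib)
    also have "\<dots> \<le> \<epsilon>" using elim assms norm_lam_pos by (simp add: field_simps)
    finally show ?case .
  qed
qed

lemma return_times:
  assumes S: "l1_space \<subseteq> S" "l1_approximable S N"
    and U: "open_in_space S N U" "U \<noteq> {}"
    and P: "P \<noteq> 0" "coeff P 0 = 0"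
  obtains a t e1 where
    "\<And>e. e1 \<le> e \<Longrightarrow> epoch_val e = a \<Longrightarrow> epoch_target e = t \<Longrightarrow> active e"
    "\<And>e. e1 \<le> e \<Longrightarrow> epoch_val e = a \<Longrightarrow> epoch_target e = t \<Longrightarrow> block_starts e
      \<subseteq> {n. ((\<lambda>x n. lam * backward_shift x n) ^^ n) (\<lambda>q. poly P (generator q)) \<in> U}"
proof -
  let ?r = "norm lam" and ?C = "coeff_norm_sum P" and ?d = "low_degree P" and ?c = "coeff P (low_degree P)"
  let ?T = "\<lambda>x n. lam * backward_shift x n" and ?f = "\<lambda>q. poly P (generator q)"
  obtain \<epsilon> L x0 where \<epsilon>: "0 < \<epsilon>" and close: "\<And>u y. (\<forall>k<L. norm (u k - x0 k) \<le> \<epsilon>) \<Longrightarrow>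
      (\<forall>k\<ge>L. u k = 0) \<Longrightarrow> summable (\<lambda>k. norm (y k)) \<Longrightarrow> (\<Sum>k. norm (y k)) \<le> \<epsilon> \<Longrightarrow>
      (\<lambda>k. u k + y k) \<in> S \<Longrightarrow> (\<lambda>k. u k + y k) \<in> U"
    by (rule open_in_space_l1_approximable[OF S(2) U]) (rule that)
  have "0 < \<epsilon> / 2" using \<epsilon> by simp
  then obtain t where t: "target_len t = L" "?C * (?r / (?r - 1)) / 2 ^ snd t \<le> \<epsilon> / 2"
    "\<forall>m<L. norm (?c * target_vec t m - x0 m) \<le> \<epsilon> / 2"
    by (rule exists_close_target[OF _ coeff_low_degree_nonzero[OF P(1)]])
  have adm: "eventually (\<lambda>e. admissible (?d - 1) t (epoch_start e)) sequentially"
    by (rule eventually_compose_filterlim[OF eventually_admissible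
          filterlim_subseq[OF strict_mono_epoch_start]])
  have err: "eventually (\<lambda>e. ?C * (real L * target_weight t / ?r ^ (3 * epoch_start e)
      + 1 / ?r ^ epoch_start (Suc e)) \<le> \<epsilon> / 2) sequentially"
    using \<epsilon> target_weight_ge_1[of t] coeff_norm_sum_nonneg[of P]
    by (intro eventually_epoch_error_le) auto
  obtain e1 where e1: "\<And>e. e1 \<le> e \<Longrightarrow> admissible (?d - 1) t (epoch_start e)"
    "\<And>e. e1 \<le> e \<Longrightarrow> ?C * (real L * target_weight t / ?r ^ (3 * epoch_start e)
      + 1 / ?r ^ epoch_start (Suc e)) \<le> \<epsilon> / 2"
    using eventually_conj[OF adm err] unfolding eventually_sequentially by blast
  show thesis
  proof (rule that)
    show act: "active e" if "e1 \<le> e" "epoch_val e = ?d - 1" "epoch_target e = t" for e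
      using e1(1)[OF that(1)] that by (simp add: active_def)
    fix e assume e: "e1 \<le> e" "epoch_val e = ?d - 1" "epoch_target e = t"
    have deg: "epoch_deg e = ?d" using e(2) low_degree_pos[OF P] by (simp add: epoch_deg_def)
    show "block_starts e \<subseteq> {n. (?T ^^ n) ?f \<in> U}"
    proof
      fix n assume "n \<in> block_starts e"
      then obtain i where i: "i < block_count e" "n = block_start e i" by (auto simp: block_starts_def)
      obtain y where y: "(?T ^^ n) ?f = (\<lambda>k. ?c * target_vec t k + y k)" "summable (\<lambda>k. norm (y k))"
        "(\<Sum>k. norm (y k)) \<le> ?C * (real L * target_weight t / ?r ^ (3 * epoch_start e)
          + ?r / (?r - 1) / 2 ^ snd t + 1 / ?r ^ epoch_start (Suc e))"
        using funpow_block_start[OF P act[OF e] deg i(1)] unfolding e(3) i(2)[symmetric] t(1) .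
      have "?C * (?r / (?r - 1) / 2 ^ snd t) \<le> \<epsilon> / 2" using t(2) by simp
      then have "(\<Sum>k. norm (y k)) \<le> \<epsilon>"
        using y(3) e1(2)[OF e(1)] by (simp only: distrib_left)
      have "?f \<in> generated_algebra" unfolding generated_algebra_def using P(2) by blast
      then have "(?T ^^ n) ?f \<in> S" using funpow_generated_algebra_in_l1_space S(1) by blast
      have "(\<lambda>k. ?c * target_vec t k + y k) \<in> U"
      proof (rule close)
        show "\<forall>k<L. norm (?c * target_vec t k - x0 k) \<le> \<epsilon>" using t(3) \<epsilon> by force
        show "\<forall>k\<ge>L. ?c * target_vec t k = 0" using target_vec_eq_0 t(1) by simp
        show "(\<lambda>k. ?c * target_vec t k + y k) \<in> S" using \<open>(?T ^^ n) ?f \<in> S\<close> y(1) by simp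
      qed fact+
      then show "n \<in> {n. (?T ^^ n) ?f \<in> U}" using y(1) by simp
    qed
  qed
qed

section \<open>Densities of the returning times\<close>

lemma block_starts_bounds:
  assumes "n \<in> block_starts e"
  shows "epoch_start e \<le> n" "n < 5 * epoch_deg e * epoch_start e" "epoch_of n = e"
proof -
  obtain j where j: "j < block_count e" "n = block_start e j + 0"
    using assms by (auto simp: block_starts_def)
  then show "epoch_start e \<le> n" using epoch_start_le_block_start by simp
  show "n < 5 * epoch_deg e * epoch_start e" using block_start_less[OF j(1) block_len_pos] j(2) by simp
  show "epoch_of n = e" using epoch_of_block_start[OF j(1) block_len_pos] j(2) by simp
qed

lemma card_block_starts: "card (block_starts e) = block_count e"
proof -
  have "inj_on (block_start e) {..<block_count e}"
    using block_len_pos[of "epoch_target e"] by (intro inj_onI) (simp add: block_start_def)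
  then show ?thesis by (simp add: block_starts_def card_image)
qed

lemma sum_inverse_block_starts_ge:
  assumes "active e"
  shows "1 / (10 * real (block_len (epoch_target e))) \<le> (\<Sum>n\<in>block_starts e. 1 / real n)"
proof -
  let ?x = "epoch_deg e * epoch_start e" and ?K = "block_len (epoch_target e)"
  have "0 < ?x" using epoch_start_pos[of e] by (simp add: epoch_deg_def)
  then have x: "0 < real ?x" by (simp only: of_nat_0_less_iff)
  have "real (card (block_starts e)) * (1 / (5 * real ?x)) \<le> (\<Sum>n\<in>block_starts e. 1 / real n)"
  proof (rule sum_bounded_below)
    fix n assume n: "n \<in> block_starts e"
    have "0 < real n" using block_starts_bounds(1)[OF n] epoch_start_pos[of e] by linarith
    moreover have "n \<le> 5 * ?x" using block_starts_bounds(2)[OF n] by (simp add: mult.assoc)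
    then have "real n \<le> 5 * real ?x" using of_nat_le_iff[of n "5 * ?x"] by simp
    ultimately show "1 / (5 * real ?x) \<le> 1 / real n" by (rule frac_le[rotated 2]) simp_all
  qed
  moreover have "real ?x / (2 * real ?K) \<le> real (card (block_starts e))"
    using block_count_ge[OF assms] by (simp only: card_block_starts)
  then have "real ?x / (2 * real ?K) * (1 / (5 * real ?x))
      \<le> real (card (block_starts e)) * (1 / (5 * real ?x))"
    using x by (intro mult_right_mono) simp_all
  moreover have "real ?x / (2 * real ?K) * (1 / (5 * real ?x)) = 1 / (10 * real ?K)"
  proof -
    have frac: "X / (2 * K) * (1 / (5 * X)) = 1 / (10 * K)" if "0 < X" "0 < K" for X K :: real
      using that by (simp add: field_simps)
    show ?thesis using x block_len_pos[of "epoch_target e"] by (intro frac) auto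
  qed
  ultimately show ?thesis by linarith
qed

lemma sum_inverse_late_blocks_ge:
  assumes act: "\<And>i. e1 \<le> i \<Longrightarrow> active (epoch_enum a t i)"
    and sub: "\<And>i. e1 \<le> i \<Longrightarrow> block_starts (epoch_enum a t i) \<subseteq> A"
    and N: "epoch_start E \<le> N"
  shows "real (E div epoch_period a t - e1) / (10 * real (block_len t))
    \<le> (\<Sum>n\<in>{n\<in>A. 1 \<le> n \<and> n \<le> N}. 1 / real n)"
proof -
  define I where "I = {e1..<E div epoch_period a t}"
  let ?B = "\<lambda>i. block_starts (epoch_enum a t i)"
  have "(\<Union>i\<in>I. ?B i) \<subseteq> {n\<in>A. 1 \<le> n \<and> n \<le> N}"
  proof safe
    fix i n assume i: "i \<in> I" and n: "n \<in> ?B i"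
    show "n \<in> A" using sub[of i] i n by (auto simp: I_def)
    show "1 \<le> n" using block_starts_bounds(1)[OF n] epoch_start_pos[of "epoch_enum a t i"] by linarith
    have "Suc (epoch_enum a t i) \<le> E" using i epoch_enum_less[of i E a t] by (simp add: I_def)
    then have "epoch_start (Suc (epoch_enum a t i)) \<le> N"
      using epoch_start_mono N order_trans by blast
    then show "n \<le> N"
      using block_starts_bounds(2)[OF n] five_deg_start_less[of "epoch_enum a t i"] by linarith
  qed
  then have "(\<Sum>n\<in>(\<Union>i\<in>I. ?B i). 1 / real n) \<le> (\<Sum>n\<in>{n\<in>A. 1 \<le> n \<and> n \<le> N}. 1 / real n)"
    by (intro sum_mono2) auto
  moreover have "(\<Sum>n\<in>(\<Union>i\<in>I. ?B i). 1 / real n) = (\<Sum>i\<in>I. \<Sum>n\<in>?B i. 1 / real n)"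
  proof (rule sum.UNION_disjoint)
    show "\<forall>i\<in>I. \<forall>j\<in>I. i \<noteq> j \<longrightarrow> ?B i \<inter> ?B j = {}"
    proof (intro ballI impI)
      fix i j :: nat assume "i \<noteq> j"
      then have "epoch_enum a t i \<noteq> epoch_enum a t j"
        using strict_mono_eq[OF strict_mono_epoch_enum] by simp
      then have "n \<notin> ?B j" if "n \<in> ?B i" for n
        using that block_starts_bounds(3) by metis
      then show "?B i \<inter> ?B j = {}" by blast
    qed
  qed (auto simp: I_def block_starts_def)
  moreover have "(\<Sum>i\<in>I. 1 / (10 * real (block_len t))) \<le> (\<Sum>i\<in>I. \<Sum>n\<in>?B i. 1 / real n)"
  proof (rule sum_mono)
    fix i assume "i \<in> I"
    then have "e1 \<le> i" by (simp add: I_def)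
    then show "1 / (10 * real (block_len t)) \<le> (\<Sum>n\<in>?B i. 1 / real n)"
      using sum_inverse_block_starts_ge[OF act] by simp
  qed
  ultimately show ?thesis by (simp add: I_def)
qed

lemma log_density_ratio_ge:
  assumes act: "\<And>i. e1 \<le> i \<Longrightarrow> active (epoch_enum a t i)"
    and sub: "\<And>i. e1 \<le> i \<Longrightarrow> block_starts (epoch_enum a t i) \<subseteq> A"
    and N: "epoch_start (2 * (epoch_period a t * (1 + e1)) + 1) \<le> N"
  shows "1 / (100 * real (block_len t) * real (epoch_period a t))
    \<le> (\<Sum>n\<in>{n\<in>A. 1 \<le> n \<and> n \<le> N}. 1 / real n) / (\<Sum>n=1..N. 1 / real n)"
proof -
  let ?K = "real (block_len t)" and ?M = "real (epoch_period a t)"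
  let ?F = "\<Sum>n\<in>{n\<in>A. 1 \<le> n \<and> n \<le> N}. 1 / real n" and ?H = "\<Sum>n=1..N. 1 / real n"
  define c where "c = 1 / (100 * ?K * ?M)"
  define E where "E = epoch_of N"
  have K: "0 < ?K" using block_len_pos by simp
  have M: "0 < epoch_period a t" by (simp add: epoch_period_def)
  have N1: "1 \<le> N" using N epoch_start_pos[of "2 * (epoch_period a t * (1 + e1)) + 1"] by linarith
  have E: "epoch_start E \<le> N" "N < epoch_start (Suc E)"
    using epoch_of_bounds[OF N1] by (simp_all add: E_def)
  have "2 * (epoch_period a t * (1 + e1)) + 1 \<le> E"
  proof (rule ccontr)
    assume "\<not> 2 * (epoch_period a t * (1 + e1)) + 1 \<le> E"
    then have "epoch_start (Suc E) \<le> epoch_start (2 * (epoch_period a t * (1 + e1)) + 1)"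
      by (intro epoch_start_mono) simp
    then show False using N E(2) by linarith
  qed
  then have "real (10 * (epoch_period a t * (1 + e1)) + 5) \<le> real (6 * E)"
    by (simp only: of_nat_le_iff)
  then have E1: "10 * (?M * (1 + real e1)) + 5 \<le> 6 * real E" by (simp add: algebra_simps)
  have "(real E / ?M - 1 - real e1) / (10 * ?K) \<le> real (E div epoch_period a t - e1) / (10 * ?K)"
    using real_div_diff_le[OF M] K by (intro divide_right_mono) auto
  also have "\<dots> \<le> ?F" by (rule sum_inverse_late_blocks_ge[OF act sub E(1)])
  finally have F: "(real E / ?M - 1 - real e1) / (10 * ?K) \<le> ?F" .
  have H: "0 < ?H" "?H \<le> 4 * real E + 5"
    using N1 harm_le_epoch[OF N1 E(2)] by (auto intro!: sum_pos)
  have "c * ?H \<le> c * (4 * real E + 5)" using H K M by (intro mult_left_mono) (auto simp: c_def)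
  also have "\<dots> \<le> (real E / ?M - 1 - real e1) / (10 * ?K)"
  proof -
    have frac: "(4 * X + 5) / (100 * K * M) \<le> (X / M - 1 - Y) / (10 * K)"
      if "0 < K" "0 < M" "10 * (M * (1 + Y)) + 5 \<le> 6 * X" for X Y K M :: real
    proof -
      have "(X / M - 1 - Y) / (10 * K) - (4 * X + 5) / (100 * K * M)
          = (6 * X - 10 * (M * (1 + Y)) - 5) / (100 * K * M)"
        using that by (simp add: field_simps)
      moreover have "0 \<le> (6 * X - 10 * (M * (1 + Y)) - 5) / (100 * K * M)" using that by simp
      ultimately show ?thesis by linarith
    qed
    show ?thesis unfolding c_def using frac[OF K _ E1] M by simp
  qed
  finally show ?thesis using F H(1) by (simp add: c_def pos_le_divide_eq)
qed

lemma lower_log_density_pos: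
  assumes act: "\<And>i. e1 \<le> i \<Longrightarrow> active (epoch_enum a t i)"
    and sub: "\<And>i. e1 \<le> i \<Longrightarrow> block_starts (epoch_enum a t i) \<subseteq> A"
  shows "0 < lower_log_density A"
proof -
  define c where "c = 1 / (100 * real (block_len t) * real (epoch_period a t))"
  have c: "0 < c" using block_len_pos[of t] by (simp add: c_def epoch_period_def)
  have "eventually (\<lambda>N. ereal c \<le> ereal ((\<Sum>n\<in>{n\<in>A. 1 \<le> n \<and> n \<le> N}. 1 / real n)
      / (\<Sum>n=1..N. 1 / real n))) sequentially"
    using log_density_ratio_ge[OF act sub] unfolding eventually_sequentially c_def by auto
  then have "ereal c \<le> lower_log_density A"
    unfolding lower_log_density_def by (rule Liminf_bounded)
  then show ?thesis using c by (simp add: order_less_le_trans[of 0 "ereal c"])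
qed

lemma upper_density_pos:
  assumes act: "\<And>i. e1 \<le> i \<Longrightarrow> active (epoch_enum a t i)"
    and sub: "\<And>i. e1 \<le> i \<Longrightarrow> block_starts (epoch_enum a t i) \<subseteq> A"
  shows "0 < upper_density A"
proof -
  let ?K = "real (block_len t)"
  define N where "N i = 5 * Suc a * epoch_start (epoch_enum a t (e1 + i))" for i
  have K: "0 < ?K" using block_len_pos by simp
  have "strict_mono N"
    using strict_mono_epoch_start strict_mono_epoch_enum
    by (intro strict_monoI) (simp add: N_def strict_mono_less)
  have bound: "1 / (12 * ?K) \<le> real (card (A \<inter> {0..N i})) / real (N i + 1)" for i
  proof -
    define e where "e = epoch_enum a t (e1 + i)"
    let ?x = "epoch_deg e * epoch_start e"
    have deg: "epoch_deg e = Suc a" by (simp add: e_def epoch_deg_def)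
    have "1 \<le> ?x" using epoch_start_pos[of e] by (simp add: epoch_deg_def Suc_le_eq)
    then have x: "1 \<le> real ?x" by (metis of_nat_1 of_nat_le_iff)
    have "block_starts e \<subseteq> A" using sub[of "e1 + i"] by (simp add: e_def)
    moreover have "block_starts e \<subseteq> {0..N i}"
    proof
      fix n assume "n \<in> block_starts e"
      then have "n < 5 * epoch_deg e * epoch_start e" by (rule block_starts_bounds(2))
      then show "n \<in> {0..N i}" using deg by (simp add: N_def e_def[symmetric])
    qed
    ultimately have "block_starts e \<subseteq> A \<inter> {0..N i}" by blast
    then have "real (block_count e) \<le> real (card (A \<inter> {0..N i}))"
      using card_mono[of "A \<inter> {0..N i}" "block_starts e"] by (simp add: card_block_starts)
    moreover have "real ?x / (2 * ?K) \<le> real (block_count e)"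
      using block_count_ge[OF act[of "e1 + i"]] by (simp add: e_def)
    moreover have "real (N i + 1) \<le> 6 * real ?x"
      using x deg by (simp add: N_def e_def[symmetric] algebra_simps)
    ultimately have "real ?x / (2 * ?K) / (6 * real ?x) \<le> real (card (A \<inter> {0..N i})) / real (N i + 1)"
      using x K by (intro frac_le) auto
    moreover have "real ?x / (2 * ?K) / (6 * real ?x) = 1 / (12 * ?K)"
    proof -
      have frac: "X / (2 * K) / (6 * X) = 1 / (12 * K)" if "0 < X" "0 < K" for X K :: real
        using that by (simp add: field_simps)
      show ?thesis using x K by (intro frac) auto
    qed
    ultimately show ?thesis by simp
  qed
  have "ereal (1 / (12 * ?K)) \<le> limsup ((\<lambda>N. ereal (real (card (A \<inter> {0..N})) / real (N + 1))) \<circ> N)"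
    using bound by (intro le_Limsup) auto
  also have "\<dots> \<le> upper_density A"
    unfolding upper_density_def by (rule limsup_subseq_mono[OF \<open>strict_mono N\<close>])
  finally show ?thesis using K by (simp add: order_less_le_trans[of 0 "ereal (1 / (12 * ?K))"])
qed

lemma admits_algebra_if_l1_approximable:
  assumes S: "l1_space \<subseteq> S" "l1_approximable S N"
  shows "admits_algebra A_log S N (\<lambda>x n. lam * backward_shift x n)"
    "admits_algebra A_ud S N (\<lambda>x n. lam * backward_shift x n)"
proof -
  let ?T = "\<lambda>x n. lam * backward_shift x n"
  have dens: "0 < lower_log_density {n. (?T ^^ n) f \<in> U} \<and> 0 < upper_density {n. (?T ^^ n) f \<in> U}"
    if f: "f \<in> generated_algebra - {\<lambda>n. 0}" and U: "open_in_space S N U" "U \<noteq> {}" for f U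
  proof -
    obtain P where P: "coeff P 0 = 0" "f = (\<lambda>q. poly P (generator q))"
      using f by (auto simp: generated_algebra_def)
    have "P \<noteq> 0" using f P by auto
    obtain a t e1 where
      act: "\<And>e. e1 \<le> e \<Longrightarrow> epoch_val e = a \<Longrightarrow> epoch_target e = t \<Longrightarrow> active e" and
      ret: "\<And>e. e1 \<le> e \<Longrightarrow> epoch_val e = a \<Longrightarrow> epoch_target e = t \<Longrightarrow>
        block_starts e \<subseteq> {n. (?T ^^ n) f \<in> U}"
      using return_times[OF S U \<open>P \<noteq> 0\<close> P(1)] unfolding P(2) by metis
    have "e1 \<le> i \<Longrightarrow> e1 \<le> epoch_enum a t i" for i
      using epoch_enum_ge[of i a t] by linarith
    then show ?thesis
      using lower_log_density_pos[of e1 a t] upper_density_pos[of e1 a t] act ret by simp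
  qed
  have sub: "is_subalgebra S generated_algebra" by (rule is_subalgebra_generated_algebra[OF S(1)])
  have "generator \<in> generated_algebra"
    unfolding generated_algebra_def by (rule CollectI, rule exI[of _ "[:0, 1:]"]) simp
  then have nontrivial: "generated_algebra \<noteq> {\<lambda>n. 0}" using generator_ne_zero by blast
  have "f \<in> S" if "f \<in> generated_algebra" for f using sub that by (auto simp: is_subalgebra_def)
  then show "admits_algebra A_log S N ?T" "admits_algebra A_ud S N ?T"
    unfolding admits_algebra_def A_hypercyclic_def A_log_def A_ud_def
    using sub nontrivial dens by blast+
qed

end

theorem corollary2p5:
  fixes lam :: complex
  assumes "norm lam > 1"
  shows "(\<forall>p::real. 1 \<le> p \<longrightarrow>
            admits_algebra A_log (lp_space p) (lp_norm p) (\<lambda>x n. lam * backward_shift x n) \<and>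
            admits_algebra A_ud (lp_space p) (lp_norm p) (\<lambda>x n. lam * backward_shift x n))
       \<and> admits_algebra A_log c0_space c0_norm (\<lambda>x n. lam * backward_shift x n)
       \<and> admits_algebra A_ud c0_space c0_norm (\<lambda>x n. lam * backward_shift x n)"
proof -
  interpret scaled_shift lam by unfold_locales (rule assms)
  show ?thesis
    using admits_algebra_if_l1_approximable[OF l1_space_subset_lp_space l1_approximable_lp]
      admits_algebra_if_l1_approximable[OF l1_space_subset_c0_space l1_approximable_c0]
    by blast
qed

end
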